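(* Let $\mathfrak{n}^{\mathbb{Q}}$ be a finite-dimensional graded rational Lie algebra and let $m\geq 2$. Let $\tilde{\mathfrak{n}}^{\mathbb{Q}}=\mathfrak{n}^{\mathbb{Q}}\oplus\cdots\oplus\mathfrak{n}^{\mathbb{Q}}$ ($m$ copies, direct sum of Lie algebras) and $\tilde{\mathfrak{n}}^{\mathbb{R}}=\mathbb{R}\otimes_{\mathbb{Q}}\tilde{\mathfrak{n}}^{\mathbb{Q}}$. Then there exists a rational form of $\tilde{\mathfrak{n}}^{\mathbb{R}}$ which is Anosov.
   Context: A Lie algebra $\mathfrak{n}$ over a field is graded if there are subspaces $\mathfrak{n}_1,\ldots,\mathfrak{n}_k$ with $\mathfrak{n}=\mathfrak{n}_1\oplus\cdots\oplus\mathfrak{n}_k$ and $[\mathfrak{n}_i,\mathfrak{n}_j]\subseteq\mathfrak{n}_{i+j}$ (with $\mathfrak{n}_l=0$ for $l>k$). A rational form of a real Lie algebra $\mathfrak{g}$ is a rational Lie subalgebra $\mathfrak{m}\subseteq \mathfrak{g}$ such that a $\mathbb{Q}$-basis of $\mathfrak{m}$ is an $\mathbb{R}$-basis of $\mathfrak{g}$. A rational Lie algebra is Anosov if it admits an automorphism that is hyperbolic (no eigenvalue of absolute value $1$) and integer-like (characteristic polynomial with integer coefficients and determinant $\pm1$). *)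

theory Defs
  imports Complex_Main "Jordan_Normal_Form.Char_Poly"
begin

text \<open>A finite-dimensional Lie algebra of
dimension d is given by structure constants c i j k (for i,j,k < d):
[e_i, e_j] = sum_k c i j k e_k.\<close>

definition vecs :: "nat \<Rightarrow> (nat \<Rightarrow> 'a::zero) set" where
  "vecs N = {x. \<forall>k\<ge>N. x k = 0}"

definition vadd :: "(nat \<Rightarrow> 'a::plus) \<Rightarrow> (nat \<Rightarrow> 'a) \<Rightarrow> nat \<Rightarrow> 'a" where
  "vadd x y = (\<lambda>k. x k + y k)"

definition smul :: "'a::times \<Rightarrow> (nat \<Rightarrow> 'a) \<Rightarrow> nat \<Rightarrow> 'a" where
  "smul a x = (\<lambda>k. a * x k)"

definition vsum :: "('i \<Rightarrow> nat \<Rightarrow> 'a::comm_monoid_add) \<Rightarrow> 'i set \<Rightarrow> nat \<Rightarrow> 'a" where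
  "vsum v I = (\<lambda>k. \<Sum>i\<in>I. v i k)"

definition sc_bracket :: "nat \<Rightarrow> (nat \<Rightarrow> nat \<Rightarrow> nat \<Rightarrow> 'a::field) \<Rightarrow>
    (nat \<Rightarrow> 'a) \<Rightarrow> (nat \<Rightarrow> 'a) \<Rightarrow> nat \<Rightarrow> 'a" where
  "sc_bracket d c x y = (\<lambda>k. if k < d then (\<Sum>i<d. \<Sum>j<d. x i * y j * c i j k) else 0)"

definition lie_sc :: "nat \<Rightarrow> (nat \<Rightarrow> nat \<Rightarrow> nat \<Rightarrow> 'a::field) \<Rightarrow> bool" where
  "lie_sc d c \<longleftrightarrow>
     (\<forall>i<d. \<forall>j<d. \<forall>k<d. c i j k = - c j i k) \<and>
     (\<forall>i<d. \<forall>j<d. \<forall>k<d. \<forall>s<d.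
        (\<Sum>l<d. c i j l * c l k s + c j k l * c l i s + c k i l * c l j s) = 0)"

definition subsp :: "nat \<Rightarrow> (nat \<Rightarrow> 'a::field) set \<Rightarrow> bool" where
  "subsp d V \<longleftrightarrow> V \<subseteq> vecs d \<and> (\<lambda>_. 0) \<in> V \<and>
     (\<forall>x\<in>V. \<forall>y\<in>V. vadd x y \<in> V) \<and> (\<forall>a. \<forall>x\<in>V. smul a x \<in> V)"

definition graded_sc :: "nat \<Rightarrow> (nat \<Rightarrow> nat \<Rightarrow> nat \<Rightarrow> 'a::field) \<Rightarrow> bool" where
  "graded_sc d c \<longleftrightarrow> (\<exists>(k::nat) (V :: nat \<Rightarrow> (nat \<Rightarrow> 'a) set).
     (\<forall>i\<in>{1..k}. subsp d (V i)) \<and>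
     (\<forall>x\<in>vecs d. \<exists>!v. (\<forall>i. v i \<in> (if i \<in> {1..k} then V i else {\<lambda>_. 0})) \<and>
                        x = vsum v {1..k}) \<and>
     (\<forall>i\<in>{1..k}. \<forall>j\<in>{1..k}. \<forall>x\<in>V i. \<forall>y\<in>V j.
        sc_bracket d c x y \<in> (if i + j \<le> k then V (i + j) else {\<lambda>_. 0})))"

text \<open>Structure constants of the direct sum of m copies of the Lie algebra with
structure constants c (dimension d); the a-th copy occupies indices a*d, ..., a*d + d - 1.\<close>
definition dsum_sc :: "nat \<Rightarrow> nat \<Rightarrow> (nat \<Rightarrow> nat \<Rightarrow> nat \<Rightarrow> 'a::zero) \<Rightarrow> nat \<Rightarrow> nat \<Rightarrow> nat \<Rightarrow> 'a" where
  "dsum_sc m d c p q r =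
     (if p div d = q div d \<and> q div d = r div d then c (p mod d) (q mod d) (r mod d) else 0)"

definition rat_indep :: "nat \<Rightarrow> (nat \<Rightarrow> nat \<Rightarrow> real) \<Rightarrow> bool" where
  "rat_indep r b \<longleftrightarrow> (\<forall>q::nat \<Rightarrow> rat.
      vsum (\<lambda>i. smul (of_rat (q i)) (b i)) {..<r} = (\<lambda>_. 0) \<longrightarrow> (\<forall>i<r. q i = 0))"

definition real_indep :: "nat \<Rightarrow> (nat \<Rightarrow> nat \<Rightarrow> real) \<Rightarrow> bool" where
  "real_indep r b \<longleftrightarrow> (\<forall>q::nat \<Rightarrow> real.
      vsum (\<lambda>i. smul (q i) (b i)) {..<r} = (\<lambda>_. 0) \<longrightarrow> (\<forall>i<r. q i = 0))"

definition rat_span :: "nat \<Rightarrow> (nat \<Rightarrow> nat \<Rightarrow> real) \<Rightarrow> (nat \<Rightarrow> real) set" where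
  "rat_span r b = {vsum (\<lambda>i. smul (of_rat (q i)) (b i)) {..<r} | q :: nat \<Rightarrow> rat. True}"

definition real_span :: "nat \<Rightarrow> (nat \<Rightarrow> nat \<Rightarrow> real) \<Rightarrow> (nat \<Rightarrow> real) set" where
  "real_span r b = {vsum (\<lambda>i. smul (q i) (b i)) {..<r} | q :: nat \<Rightarrow> real. True}"

definition rat_basis :: "(nat \<Rightarrow> real) set \<Rightarrow> nat \<Rightarrow> (nat \<Rightarrow> nat \<Rightarrow> real) \<Rightarrow> bool" where
  "rat_basis M r b \<longleftrightarrow> (\<forall>i<r. b i \<in> M) \<and> rat_indep r b \<and> M = rat_span r b"

definition rat_lie_subalg ::
    "nat \<Rightarrow> ((nat \<Rightarrow> real) \<Rightarrow> (nat \<Rightarrow> real) \<Rightarrow> nat \<Rightarrow> real) \<Rightarrow> (nat \<Rightarrow> real) set \<Rightarrow> bool" where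
  "rat_lie_subalg N B M \<longleftrightarrow> M \<subseteq> vecs N \<and> (\<lambda>_. 0) \<in> M \<and>
     (\<forall>x\<in>M. \<forall>y\<in>M. vadd x y \<in> M) \<and> (\<forall>q::rat. \<forall>x\<in>M. smul (of_rat q) x \<in> M) \<and>
     (\<forall>x\<in>M. \<forall>y\<in>M. B x y \<in> M)"

definition rational_form ::
    "nat \<Rightarrow> ((nat \<Rightarrow> real) \<Rightarrow> (nat \<Rightarrow> real) \<Rightarrow> nat \<Rightarrow> real) \<Rightarrow> (nat \<Rightarrow> real) set \<Rightarrow> bool" where
  "rational_form N B M \<longleftrightarrow> rat_lie_subalg N B M \<and>
     (\<exists>r b. rat_basis M r b \<and> real_indep r b \<and> real_span r b = vecs N)"

definition hyperbolic_mat :: "rat mat \<Rightarrow> bool" where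
  "hyperbolic_mat A \<longleftrightarrow> (\<forall>z::complex. eigenvalue (map_mat of_rat A) z \<longrightarrow> cmod z \<noteq> 1)"

definition integer_like_mat :: "rat mat \<Rightarrow> bool" where
  "integer_like_mat A \<longleftrightarrow> (\<forall>i. coeff (char_poly A) i \<in> \<int>) \<and> (det A = 1 \<or> det A = -1)"

definition anosov ::
    "((nat \<Rightarrow> real) \<Rightarrow> (nat \<Rightarrow> real) \<Rightarrow> nat \<Rightarrow> real) \<Rightarrow> (nat \<Rightarrow> real) set \<Rightarrow> bool" where
  "anosov B M \<longleftrightarrow> (\<exists>f r b (A :: rat mat).
     rat_basis M r b \<and> A \<in> carrier_mat r r \<and>
     bij_betw f M M \<and>
     (\<forall>x\<in>M. \<forall>y\<in>M. f (vadd x y) = vadd (f x) (f y)) \<and>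
     (\<forall>q::rat. \<forall>x\<in>M. f (smul (of_rat q) x) = smul (of_rat q) (f x)) \<and>
     (\<forall>x\<in>M. \<forall>y\<in>M. f (B x y) = B (f x) (f y)) \<and>
     (\<forall>j<r. f (b j) = vsum (\<lambda>i. smul (of_rat (A $$ (i, j))) (b i)) {..<r}) \<and>
     hyperbolic_mat A \<and> integer_like_mat A)"

end

theory Submission
  imports Defs
begin

text \<open>Choose a monic integer polynomial \<open>P\<close> of degree \<open>m\<close> with constant term \<open>\<plusminus>1\<close> and
  \<open>m\<close> distinct real roots \<open>\<rho>\<^sub>1, \<dots>, \<rho>\<^sub>m\<close>, none of absolute value \<open>1\<close>: a product of
  factors \<open>x\<^sup>2 - k x - 1\<close> for distinct \<open>k\<close>, times \<open>x\<^sup>3 - 3 x - 1\<close> when \<open>m\<close> is odd. Evaluation at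
  the roots embeds \<open>\<rat>[x]/(P)\<close> into \<open>\<real>\<^sup>m\<close>, so \<open>n\<^sup>\<rat> \<otimes> \<rat>[x]/(P)\<close> is a rational form of the
  \<open>m\<close>-fold sum of \<open>n\<^sup>\<real>\<close>; \<open>P\<close> need not be irreducible. Multiplying the degree-\<open>g\<close> part of the
  grading by the unit \<open>\<rho>\<^sup>g\<close> is an automorphism of this form. In the basis \<open>v\<^sub>i \<otimes> \<rho>\<^sup>t\<close> it is
  block diagonal with integer blocks (multiplication by \<open>\<rho>\<^sup>g\<close> on \<open>\<int>[\<rho>]\<close>), its inverse is integral
  as well (multiplication by \<open>\<rho>\<^sup>-\<^sup>g\<close>), so its determinant is \<open>\<plusminus>1\<close>; and its eigenvalues
  \<open>\<rho>\<^sub>a\<^sup>g\<close> with \<open>g \<ge> 1\<close> are off the unit circle.\<close>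

section \<open>Integer polynomials with real roots off the unit circle\<close>

definition hyperbolic_unit_poly :: "int poly \<Rightarrow> real set \<Rightarrow> bool" where
  "hyperbolic_unit_poly P S \<longleftrightarrow> lead_coeff P = 1 \<and> \<bar>coeff P 0\<bar> = 1 \<and>
     finite S \<and> card S = degree P \<and> (\<forall>x\<in>S. poly (of_int_poly P) x = 0 \<and> \<bar>x\<bar> \<noteq> 1)"

lemma hyperbolic_unit_poly_one: "hyperbolic_unit_poly 1 {}"
  by (simp add: hyperbolic_unit_poly_def)

lemma hyperbolic_unit_poly_mult:
  assumes P: "hyperbolic_unit_poly P S" and Q: "hyperbolic_unit_poly Q T" and "S \<inter> T = {}"
  shows "hyperbolic_unit_poly (P * Q) (S \<union> T)"
proof -
  have "P \<noteq> 0" "Q \<noteq> 0"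
    using P Q by (auto simp: hyperbolic_unit_poly_def)
  then have "degree (P * Q) = degree P + degree Q"
    by (rule degree_mult_eq)
  moreover have "lead_coeff (P * Q) = 1" "\<bar>coeff (P * Q) 0\<bar> = 1"
    using P Q by (simp_all add: hyperbolic_unit_poly_def lead_coeff_mult coeff_mult_0 abs_mult)
  moreover have "card (S \<union> T) = card S + card T"
    using P Q \<open>S \<inter> T = {}\<close> by (simp add: hyperbolic_unit_poly_def card_Un_disjoint)
  ultimately show ?thesis
    using P Q by (auto simp: hyperbolic_unit_poly_def of_int_poly_hom.hom_mult)
qed

lemma hyperbolic_unit_poly_quadratic:
  fixes N :: nat
  assumes "0 < N"
  obtains \<alpha> :: real where "N < \<alpha>" and "\<alpha> < N + 1"
    and "hyperbolic_unit_poly [:-1, - int N, 1:] {\<alpha>, -1 / \<alpha>}"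
proof -
  define s where "s = sqrt (N\<^sup>2 + 4)"
  define \<alpha> where "\<alpha> = (N + s) / 2"
  have s2: "s\<^sup>2 = N\<^sup>2 + 4" unfolding s_def by simp
  have "N < s" unfolding s_def by (rule real_less_rsqrt) simp
  moreover have "s < N + 2"
    unfolding s_def using assms by (intro real_less_lsqrt) (auto simp: power2_eq_square algebra_simps)
  ultimately have bounds: "N < \<alpha>" "\<alpha> < N + 1"
    unfolding \<alpha>_def by auto
  then have "1 < \<alpha>" using assms by linarith
  have root: "\<alpha>\<^sup>2 - N * \<alpha> - 1 = 0"
    unfolding \<alpha>_def using s2 by (simp add: power2_eq_square field_simps)
  have "(-1 / \<alpha>)\<^sup>2 - N * (-1 / \<alpha>) - 1 = - (\<alpha>\<^sup>2 - N * \<alpha> - 1) / \<alpha>\<^sup>2"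
    using \<open>1 < \<alpha>\<close> by (simp add: field_simps power2_eq_square)
  with root have root': "(-1 / \<alpha>)\<^sup>2 - N * (-1 / \<alpha>) - 1 = 0"
    by simp
  have "poly (of_int_poly [:-1, - int N, 1:]) x = x\<^sup>2 - N * x - 1" for x :: real
    by (simp add: power2_eq_square algebra_simps)
  moreover have "\<bar>-1 / \<alpha>\<bar> < 1"
    using \<open>1 < \<alpha>\<close> by auto
  moreover have "card {\<alpha>, -1 / \<alpha>} = 2"
  proof -
    have "-1 / \<alpha> < 0" using \<open>1 < \<alpha>\<close> by simp
    then have "\<alpha> \<noteq> -1 / \<alpha>" using \<open>1 < \<alpha>\<close> by linarith
    then show ?thesis by simp
  qed
  ultimately have "hyperbolic_unit_poly [:-1, - int N, 1:] {\<alpha>, -1 / \<alpha>}"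
    using root root' \<open>1 < \<alpha>\<close> by (simp add: hyperbolic_unit_poly_def)
  with bounds that show thesis by blast
qed

text \<open>The roots of the factors \<open>x\<^sup>2 - k x - 1\<close> with \<open>k \<ge> N\<close> lie outside this region;
  this keeps the roots of the growing product distinct.\<close>
definition root_region :: "nat \<Rightarrow> real set" where
  "root_region N = {x. x < N \<and> (x \<le> 0 \<longrightarrow> x < -1 / N)}"

lemma hyperbolic_unit_poly_extend:
  assumes P: "hyperbolic_unit_poly P S" and S: "S \<subseteq> root_region N" and "0 < N"
  obtains Q T where "hyperbolic_unit_poly Q T" and "card T = card S + 2"
    and "T \<subseteq> root_region (Suc N)"
proof -
  obtain \<alpha> :: real where \<alpha>: "N < \<alpha>" "\<alpha> < N + 1"
    and quad: "hyperbolic_unit_poly [:-1, - int N, 1:] {\<alpha>, -1 / \<alpha>}"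
    using hyperbolic_unit_poly_quadratic[OF \<open>0 < N\<close>] .
  have \<beta>: "-1 / N < -1 / \<alpha>" "-1 / \<alpha> < -1 / Suc N" "-1 / \<alpha> < 0"
    and shrink: "-1 / N < -1 / Suc N"
    using \<alpha> \<open>0 < N\<close> by (auto simp: field_simps)
  have disj: "S \<inter> {\<alpha>, -1 / \<alpha>} = {}"
    using S \<alpha> \<beta> by (auto simp: root_region_def)
  have "0 < \<alpha>"
    using \<alpha>(1) \<open>0 < N\<close> of_nat_0_less_iff[of N, where 'a=real] by linarith
  moreover have "-1 / \<alpha> < Suc N"
    using \<beta>(3) of_nat_0_le_iff[of N, where 'a=real] by linarith
  ultimately have "{\<alpha>, -1 / \<alpha>} \<subseteq> root_region (Suc N)"
    using \<alpha> \<beta>(2) by (simp add: root_region_def)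
  moreover have "S \<subseteq> root_region (Suc N)"
    using S shrink by (force simp: root_region_def)
  ultimately have "S \<union> {\<alpha>, -1 / \<alpha>} \<subseteq> root_region (Suc N)"
    by blast
  moreover have "card (S \<union> {\<alpha>, -1 / \<alpha>}) = card S + 2"
    using P quad disj by (subst card_Un_disjoint) (auto simp: hyperbolic_unit_poly_def)
  ultimately show thesis
    using that hyperbolic_unit_poly_mult[OF P quad disj] by blast
qed

lemma hyperbolic_unit_poly_cubic:
  obtains S where "hyperbolic_unit_poly [:-1, -3, 0, 1:] S" and "card S = 3"
    and "S \<subseteq> root_region 3"
proof -
  define P :: "real poly" where "P = [:-1, -3, 0, 1:]"
  have P: "poly P x = x ^ 3 - 3 * x - 1" for x
    unfolding P_def by (simp add: power3_eq_cube algebra_simps)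
  obtain r1 where r1: "-2 < r1" "r1 < -3/2" "poly P r1 = 0"
    using poly_IVT_pos[of "-2" "-3/2" P] by (auto simp: P power3_eq_cube)
  obtain r2 where r2: "-1/2 < r2" "r2 < -1/3" "poly P r2 = 0"
    using poly_IVT_neg[of "-1/2" "-1/3" P] by (auto simp: P power3_eq_cube)
  obtain r3 where r3: "1 < r3" "r3 < 2" "poly P r3 = 0"
    using poly_IVT_pos[of 1 2 P] by (auto simp: P power3_eq_cube)
  have "of_int_poly [:-1, -3, 0, 1:] = P"
    by (simp add: P_def)
  moreover have "card {r1, r2, r3} = 3"
    using r1 r2 r3 by simp
  moreover have "{r1, r2, r3} \<subseteq> root_region 3"
    using r1 r2 r3 by (auto simp: root_region_def)
  ultimately have "hyperbolic_unit_poly [:-1, -3, 0, 1:] {r1, r2, r3}"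
    using r1 r2 r3 by (auto simp: hyperbolic_unit_poly_def)
  then show thesis
    using that \<open>card {r1, r2, r3} = 3\<close> \<open>{r1, r2, r3} \<subseteq> root_region 3\<close> by blast
qed

lemma hyperbolic_unit_poly_iterate:
  assumes "hyperbolic_unit_poly P S" and "S \<subseteq> root_region N" and "0 < N"
  obtains Q T where "hyperbolic_unit_poly Q T" and "card T = card S + 2 * k"
    and "T \<subseteq> root_region (N + k)"
proof (induction k arbitrary: thesis)
  case 0
  then show ?case using assms by simp
next
  case (Suc k)
  obtain Q T where "hyperbolic_unit_poly Q T" "card T = card S + 2 * k" "T \<subseteq> root_region (N + k)"
    using Suc.IH by blast
  then obtain Q' T' where "hyperbolic_unit_poly Q' T'" "card T' = card S + 2 * Suc k"
    "T' \<subseteq> root_region (N + Suc k)"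
    using hyperbolic_unit_poly_extend[of Q T "N + k"] \<open>0 < N\<close> by auto
  then show ?case using Suc.prems by blast
qed

lemma hyperbolic_unit_poly_exists:
  assumes "m \<noteq> 1"
  obtains P S where "hyperbolic_unit_poly P S" and "card S = m"
proof (cases "even m")
  case True
  then obtain k where "m = 2 * k" by blast
  moreover obtain Q T where "hyperbolic_unit_poly Q T" "card T = card {} + 2 * k"
    by (rule hyperbolic_unit_poly_iterate[OF hyperbolic_unit_poly_one, of 1 k]) auto
  ultimately show thesis
    using that by simp
next
  case False
  then obtain j where "m = 2 * j + 1" by (rule oddE)
  with assms have m: "m = 3 + 2 * (j - 1)"
    by simp
  obtain S where cubic: "hyperbolic_unit_poly [:-1, -3, 0, 1:] S" and "card S = 3"
    and region: "S \<subseteq> root_region 3"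
    using hyperbolic_unit_poly_cubic .
  obtain Q T where "hyperbolic_unit_poly Q T" "card T = card S + 2 * (j - 1)"
    by (rule hyperbolic_unit_poly_iterate[OF cubic region, of "j - 1"]) auto
  then show thesis
    using that \<open>card S = 3\<close> m by simp
qed

section \<open>Polynomials vanishing at distinct points\<close>

lemma poly_eq_sum_lessThan:
  fixes p :: "'a::comm_semiring_1 poly"
  assumes "degree p < m"
  shows "poly p y = (\<Sum>t<m. coeff p t * y ^ t)"
proof -
  have "poly p y = (\<Sum>t\<le>degree p. coeff p t * y ^ t)" by (rule poly_altdef)
  also have "\<dots> = (\<Sum>t<m. coeff p t * y ^ t)"
    by (rule sum.mono_neutral_left) (use assms in \<open>auto simp: coeff_eq_0\<close>)
  finally show ?thesis .
qed

lemma sum_powers_eq_0_imp_coeffs_0: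
  fixes x r :: "nat \<Rightarrow> 'a::idom"
  assumes inj: "inj_on r {..<m}" and zero: "\<And>a. a < m \<Longrightarrow> (\<Sum>t<m. x t * r a ^ t) = 0"
    and "t < m"
  shows "x t = 0"
proof -
  define p where "p = (\<Sum>t<m. monom (x t) t)"
  have coeff_p: "coeff p t = (if t < m then x t else 0)" for t
    unfolding p_def by (simp add: coeff_sum)
  have "p = 0"
  proof (rule ccontr)
    assume "p \<noteq> 0"
    then obtain t where "coeff p t \<noteq> 0" by (metis leading_coeff_0_iff)
    then have "0 < m" using coeff_p by (auto split: if_splits)
    then have "degree p < m"
      using degree_le[of "m - 1" p] coeff_p by fastforce
    have "r ` {..<m} \<subseteq> {y. poly p y = 0}"
      using zero by (auto simp: p_def poly_sum poly_monom)
    then have "card (r ` {..<m}) \<le> card {y. poly p y = 0}"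
      by (rule card_mono[OF poly_roots_finite[OF \<open>p \<noteq> 0\<close>]])
    also have "\<dots> \<le> degree p" by (rule card_poly_roots_bound[OF \<open>p \<noteq> 0\<close>])
    finally show False
      using \<open>degree p < m\<close> card_image[OF inj] by simp
  qed
  then show ?thesis using coeff_p[of t] \<open>t < m\<close> by simp
qed

lemma lagrange_coeffs:
  fixes r :: "nat \<Rightarrow> 'a::field"
  assumes inj: "inj_on r {..<m}"
  obtains L where "\<And>a a'. a < m \<Longrightarrow> a' < m \<Longrightarrow> (\<Sum>t<m. L a t * r a' ^ t) = of_bool (a = a')"
proof
  define q where "q a = (\<Prod>b\<in>{..<m}-{a}. [:- r b, 1:])" for a
  define p where "p a = Polynomial.smult (1 / (\<Prod>b\<in>{..<m}-{a}. (r a - r b))) (q a)" for a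
  fix a a' assume a: "a < m" and a': "a' < m"
  have "degree (q a) \<le> (\<Sum>b\<in>{..<m}-{a}. degree [:- r b, 1:])"
    unfolding q_def using degree_prod_sum_le[of "{..<m}-{a}" "\<lambda>b. [:- r b, 1:]"] by (simp add: o_def)
  also have "\<dots> < m" using a by simp
  finally have "degree (p a) < m"
    unfolding p_def by (meson degree_smult_le le_less_trans)
  then have "(\<Sum>t<m. coeff (p a) t * r a' ^ t) = poly (p a) (r a')"
    by (rule poly_eq_sum_lessThan[symmetric])
  also have "\<dots> = of_bool (a = a')"
  proof (cases "a = a'")
    case True
    have "(\<Prod>b\<in>{..<m}-{a}. (r a - r b)) \<noteq> 0"
      using a by (auto dest: inj_onD[OF inj])
    then show ?thesis using True by (simp add: p_def q_def poly_prod)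
  next
    case False
    then have "(\<Prod>b\<in>{..<m}-{a}. (r a' - r b)) = 0"
      using a' by (auto simp: prod_zero_iff)
    then show ?thesis using False by (simp add: p_def q_def poly_prod)
  qed
  finally show "(\<Sum>t<m. coeff (p a) t * r a' ^ t) = of_bool (a = a')" .
qed

section \<open>The ring \<open>\<int>[\<rho>]\<close>\<close>

locale unit_root_family =
  fixes P :: "int poly" and m :: nat and \<rho> :: "nat \<Rightarrow> real"
  assumes monic: "lead_coeff P = 1" and degree: "degree P = m" and m_pos: "0 < m"
    and unit_const: "\<bar>coeff P 0\<bar> = 1"
    and roots: "\<And>a. a < m \<Longrightarrow> poly (of_int_poly P) (\<rho> a) = 0"
    and distinct: "inj_on \<rho> {..<m}"
    and off_circle: "\<And>a. a < m \<Longrightarrow> \<bar>\<rho> a\<bar> \<noteq> 1"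
begin

lemma root_power_eq: "a < m \<Longrightarrow> \<rho> a ^ m = - (\<Sum>t<m. of_int (coeff P t) * \<rho> a ^ t)"
  using roots[of a] poly_altdef[of "of_int_poly P" "\<rho> a"] monic degree
  by (simp add: lessThan_Suc_atMost[symmetric] eq_neg_iff_add_eq_0 add.commute)

lemma root_nonzero: "a < m \<Longrightarrow> \<rho> a \<noteq> 0"
  using roots[of a] unit_const by (auto simp: poly_0_coeff_0)

text \<open>The ring \<open>\<int>[\<rho>]\<close>, realised as functions on the set of the \<open>m\<close> roots.\<close>
definition Z_rho :: "(nat \<Rightarrow> real) set" where
  "Z_rho = {h. \<exists>c::nat \<Rightarrow> int. \<forall>a<m. h a = (\<Sum>t<m. of_int (c t) * \<rho> a ^ t)}"

lemma Z_rho_cong: "h \<in> Z_rho \<Longrightarrow> (\<And>a. a < m \<Longrightarrow> h a = h' a) \<Longrightarrow> h' \<in> Z_rho"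
  unfolding Z_rho_def by auto

lemma Z_rho_add: "h \<in> Z_rho \<Longrightarrow> h' \<in> Z_rho \<Longrightarrow> (\<lambda>a. h a + h' a) \<in> Z_rho"
  unfolding Z_rho_def
proof (elim CollectE exE, intro CollectI)
  fix c c' assume "\<forall>a<m. h a = (\<Sum>t<m. of_int (c t) * \<rho> a ^ t)"
    and "\<forall>a<m. h' a = (\<Sum>t<m. of_int (c' t) * \<rho> a ^ t)"
  then show "\<exists>c''::nat\<Rightarrow>int. \<forall>a<m. h a + h' a = (\<Sum>t<m. of_int (c'' t) * \<rho> a ^ t)"
    by (intro exI[of _ "\<lambda>t. c t + c' t"]) (simp add: sum.distrib distrib_right)
qed

lemma Z_rho_scale: "h \<in> Z_rho \<Longrightarrow> (\<lambda>a. of_int z * h a) \<in> Z_rho"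
  unfolding Z_rho_def
proof (elim CollectE exE, intro CollectI)
  fix c assume "\<forall>a<m. h a = (\<Sum>t<m. of_int (c t) * \<rho> a ^ t)"
  then show "\<exists>c'::nat\<Rightarrow>int. \<forall>a<m. of_int z * h a = (\<Sum>t<m. of_int (c' t) * \<rho> a ^ t)"
    by (intro exI[of _ "\<lambda>t. z * c t"]) (simp add: sum_distrib_left mult.assoc)
qed

lemma Z_rho_sum:
  "finite S \<Longrightarrow> (\<And>x. x \<in> S \<Longrightarrow> f x \<in> Z_rho) \<Longrightarrow> (\<lambda>a. \<Sum>x\<in>S. f x a) \<in> Z_rho"
proof (induction S rule: finite_induct)
  case empty
  show ?case unfolding Z_rho_def by (intro CollectI exI[of _ "\<lambda>_. 0"]) simp
next
  case (insert x F)
  then show ?case using Z_rho_add[of "f x" "\<lambda>a. \<Sum>x\<in>F. f x a"] by simp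
qed

lemma Z_rho_power_less: "t < m \<Longrightarrow> (\<lambda>a. \<rho> a ^ t) \<in> Z_rho"
  unfolding Z_rho_def by (intro CollectI exI[of _ "\<lambda>s. of_bool (s = t)"]) auto

lemma Z_rho_mult_root: "h \<in> Z_rho \<Longrightarrow> (\<lambda>a. \<rho> a * h a) \<in> Z_rho"
proof -
  assume "h \<in> Z_rho"
  then obtain c where c: "\<forall>a<m. h a = (\<Sum>t<m. of_int (c t) * \<rho> a ^ t)"
    unfolding Z_rho_def by auto
  have "(\<lambda>a. of_int (-1) * (\<Sum>t<m. of_int (coeff P t) * \<rho> a ^ t)) \<in> Z_rho"
    by (intro Z_rho_scale Z_rho_sum Z_rho_power_less) auto
  then have "(\<lambda>a. \<rho> a ^ m) \<in> Z_rho"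
    by (rule Z_rho_cong) (simp add: root_power_eq)
  then have "(\<lambda>a. \<rho> a ^ Suc t) \<in> Z_rho" if "t < m" for t
    using that Z_rho_power_less[of "Suc t"] by (cases "Suc t = m") auto
  then have "(\<lambda>a. \<Sum>t<m. of_int (c t) * \<rho> a ^ Suc t) \<in> Z_rho"
    by (intro Z_rho_sum Z_rho_scale) auto
  then show ?thesis
    by (rule Z_rho_cong) (simp add: c sum_distrib_left mult_ac)
qed

lemma Z_rho_poly: "(\<lambda>a. poly (of_int_poly q) (\<rho> a)) \<in> Z_rho"
proof (induction q)
  case (pCons c q)
  have "(\<lambda>a. of_int c * \<rho> a ^ 0 + \<rho> a * poly (of_int_poly q) (\<rho> a)) \<in> Z_rho"
    using m_pos pCons.IH by (intro Z_rho_add Z_rho_scale Z_rho_power_less Z_rho_mult_root) auto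
  then show ?case by (simp add: of_int_hom.map_poly_pCons_hom)
qed (use m_pos Z_rho_power_less[of 0] Z_rho_scale[of _ 0] in auto)

lemma Z_rho_iff_poly: "h \<in> Z_rho \<longleftrightarrow> (\<exists>q. \<forall>a<m. h a = poly (of_int_poly q) (\<rho> a))"
proof
  assume "h \<in> Z_rho"
  then obtain c where c: "\<forall>a<m. h a = (\<Sum>t<m. of_int (c t) * \<rho> a ^ t)"
    unfolding Z_rho_def by auto
  have "poly (of_int_poly (\<Sum>t<m. monom (c t) t)) x = (\<Sum>t<m. of_int (c t) * x ^ t)" for x :: real
    by (simp add: of_int_poly_hom.hom_sum poly_sum of_int_hom.map_poly_hom_monom poly_monom)
  with c have "\<forall>a<m. h a = poly (of_int_poly (\<Sum>t<m. monom (c t) t)) (\<rho> a)"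
    by simp
  then show "\<exists>q. \<forall>a<m. h a = poly (of_int_poly q) (\<rho> a)" ..
qed (auto intro: Z_rho_cong[OF Z_rho_poly])

lemma Z_rho_mult: "h \<in> Z_rho \<Longrightarrow> h' \<in> Z_rho \<Longrightarrow> (\<lambda>a. h a * h' a) \<in> Z_rho"
proof -
  assume "h \<in> Z_rho" "h' \<in> Z_rho"
  then obtain q q' where "\<forall>a<m. h a = poly (of_int_poly q) (\<rho> a)"
    and "\<forall>a<m. h' a = poly (of_int_poly q') (\<rho> a)"
    unfolding Z_rho_iff_poly by blast
  then have "\<forall>a<m. h a * h' a = poly (of_int_poly (q * q')) (\<rho> a)"
    by (simp add: of_int_poly_hom.hom_mult)
  then show ?thesis unfolding Z_rho_iff_poly by blast
qed

lemma Z_rho_power: "(\<lambda>a. \<rho> a ^ n) \<in> Z_rho"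
  using Z_rho_poly[of "monom 1 n"] by (simp add: of_int_hom.map_poly_hom_monom poly_monom)

lemma Z_rho_inverse: "(\<lambda>a. inverse (\<rho> a)) \<in> Z_rho"
proof -
  obtain c Q where P: "P = pCons c Q" by (cases P)
  have "c * c = 1"
    using unit_const unfolding P by (metis abs_mult_self_eq coeff_pCons_0 mult_1)
  have "inverse (\<rho> a) = of_int (- c) * poly (of_int_poly Q) (\<rho> a)" if "a < m" for a
  proof -
    have "of_int c + \<rho> a * poly (of_int_poly Q) (\<rho> a) = 0"
      using roots[OF that] unfolding P by (simp add: of_int_hom.map_poly_pCons_hom)
    then have "\<rho> a * poly (of_int_poly Q) (\<rho> a) = - of_int c"
      by linarith
    then have "\<rho> a * (of_int (- c) * poly (of_int_poly Q) (\<rho> a)) = of_int (c * c)"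
      by (simp add: mult.left_commute[of "\<rho> a"])
    with \<open>c * c = 1\<close> root_nonzero[OF that] show ?thesis
      by (simp add: field_simps)
  qed
  then show ?thesis
    by (intro Z_rho_cong[OF Z_rho_scale[OF Z_rho_poly[of Q], of "- c"]]) auto
qed

lemma Z_rho_inverse_power: "(\<lambda>a. inverse (\<rho> a) ^ n) \<in> Z_rho"
proof (induction n)
  case 0
  then show ?case using Z_rho_power[of 0] by simp
next
  case (Suc n)
  then show ?case using Z_rho_mult[OF Z_rho_inverse Suc] by simp
qed

definition Z_coords :: "(nat \<Rightarrow> real) \<Rightarrow> nat \<Rightarrow> int" where
  "Z_coords h = (SOME c. \<forall>a<m. h a = (\<Sum>t<m. of_int (c t) * \<rho> a ^ t))"

lemma Z_coords:
  assumes "h \<in> Z_rho" and "a < m"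
  shows "(\<Sum>t<m. of_int (Z_coords h t) * \<rho> a ^ t) = h a"
proof -
  from assms(1) have "\<exists>c. \<forall>a<m. h a = (\<Sum>t<m. of_int (c t) * \<rho> a ^ t)"
    unfolding Z_rho_def by blast
  then have "\<forall>a<m. h a = (\<Sum>t<m. of_int (Z_coords h t) * \<rho> a ^ t)"
    unfolding Z_coords_def by (rule someI_ex)
  with assms(2) show ?thesis by simp
qed

text \<open>The integer matrix of multiplication by \<open>h\<close> on \<open>\<int>[\<rho>]\<close> with respect to
  \<open>1, \<rho>, \<dots>, \<rho>\<^sup>m\<^sup>-\<^sup>1\<close>: column \<open>q\<close> holds the coordinates of \<open>h \<rho>\<^sup>q\<close>.\<close>
definition mult_coeff :: "(nat \<Rightarrow> real) \<Rightarrow> nat \<Rightarrow> nat \<Rightarrow> int" where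
  "mult_coeff h p q = Z_coords (\<lambda>a. h a * \<rho> a ^ q) p"

lemma mult_coeff:
  "h \<in> Z_rho \<Longrightarrow> a < m \<Longrightarrow> (\<Sum>p<m. of_int (mult_coeff h p q) * \<rho> a ^ p) = h a * \<rho> a ^ q"
  unfolding mult_coeff_def by (rule Z_coords[OF Z_rho_mult[OF _ Z_rho_power]])

lemma mult_coeff_inverse:
  assumes h: "h \<in> Z_rho" and h': "h' \<in> Z_rho" and inv: "\<And>a. a < m \<Longrightarrow> h a * h' a = 1"
    and "p < m" and "q < m"
  shows "(\<Sum>t<m. mult_coeff h p t * mult_coeff h' t q) = of_bool (p = q)"
proof -
  define x :: "nat \<Rightarrow> real"
    where "x p = of_int (\<Sum>t<m. mult_coeff h p t * mult_coeff h' t q) - of_bool (p = q)" for p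
  have "(\<Sum>p<m. x p * \<rho> a ^ p) = 0" if a: "a < m" for a
  proof -
    have "(\<Sum>p<m. of_int (\<Sum>t<m. mult_coeff h p t * mult_coeff h' t q) * \<rho> a ^ p) =
        (\<Sum>p<m. \<Sum>t<m. of_int (mult_coeff h' t q) * (of_int (mult_coeff h p t) * \<rho> a ^ p))"
      by (simp add: sum_distrib_left sum_distrib_right mult_ac)
    also have "\<dots> = (\<Sum>t<m. of_int (mult_coeff h' t q) * (\<Sum>p<m. of_int (mult_coeff h p t) * \<rho> a ^ p))"
      by (subst sum.swap) (simp add: sum_distrib_left)
    also have "\<dots> = (\<Sum>t<m. of_int (mult_coeff h' t q) * (h a * \<rho> a ^ t))"
      by (simp only: mult_coeff[OF h a])
    also have "\<dots> = h a * (\<Sum>t<m. of_int (mult_coeff h' t q) * \<rho> a ^ t)"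
      by (simp add: sum_distrib_left mult_ac)
    also have "\<dots> = \<rho> a ^ q"
      using inv[OF a] by (simp add: mult_coeff[OF h' a] mult.assoc[symmetric])
    also have "\<dots> = (\<Sum>p<m. of_bool (p = q) * \<rho> a ^ p)"
      using \<open>q < m\<close> by simp
    finally show ?thesis
      unfolding x_def by (simp add: left_diff_distrib sum_subtractf)
  qed
  then have "x p = 0"
    using sum_powers_eq_0_imp_coeffs_0[OF distinct] \<open>p < m\<close> by blast
  then show ?thesis
    unfolding x_def by (simp add: of_int_eq_iff[symmetric, where 'a=real])
qed

lemma mult_coeff_eigenvector:
  fixes y :: "nat \<Rightarrow> 'a::real_field"
  assumes h: "h \<in> Z_rho"
    and eigen: "\<And>p. p < m \<Longrightarrow> (\<Sum>q<m. of_int (mult_coeff h p q) * y q) = z * y p"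
    and not_eigen: "\<And>a. a < m \<Longrightarrow> z \<noteq> of_real (h a)" and "q < m"
  shows "y q = 0"
proof -
  have "(\<Sum>p<m. y p * of_real (\<rho> a) ^ p) = 0" if a: "a < m" for a
  proof -
    define r :: 'a where "r = of_real (\<rho> a)"
    have column: "(\<Sum>p<m. of_int (mult_coeff h p q) * r ^ p) = of_real (h a) * r ^ q" for q
      using arg_cong[OF mult_coeff[OF h a, of q], of "of_real :: real \<Rightarrow> 'a"]
      by (simp add: r_def)
    have "z * (\<Sum>p<m. y p * r ^ p) = (\<Sum>p<m. (z * y p) * r ^ p)"
      by (simp add: sum_distrib_left mult_ac)
    also have "\<dots> = (\<Sum>p<m. (\<Sum>q<m. of_int (mult_coeff h p q) * y q) * r ^ p)"
      by (intro sum.cong refl) (simp add: eigen)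
    also have "\<dots> = (\<Sum>p<m. \<Sum>q<m. y q * (of_int (mult_coeff h p q) * r ^ p))"
      by (simp add: sum_distrib_left sum_distrib_right mult_ac)
    also have "\<dots> = (\<Sum>q<m. y q * (\<Sum>p<m. of_int (mult_coeff h p q) * r ^ p))"
      by (subst sum.swap) (simp add: sum_distrib_left)
    also have "\<dots> = (\<Sum>q<m. y q * (of_real (h a) * r ^ q))"
      by (simp only: column)
    also have "\<dots> = of_real (h a) * (\<Sum>q<m. y q * r ^ q)"
      by (simp add: sum_distrib_left mult_ac)
    finally have "(z - of_real (h a)) * (\<Sum>p<m. y p * r ^ p) = 0"
      by (simp add: left_diff_distrib)
    with not_eigen[OF a] show ?thesis by (simp add: r_def)
  qed
  moreover have "inj_on (\<lambda>a. of_real (\<rho> a) :: 'a) {..<m}"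
    using distinct by (auto simp: inj_on_def)
  ultimately show ?thesis
    using sum_powers_eq_0_imp_coeffs_0[where r = "\<lambda>a. of_real (\<rho> a)" and x = y] \<open>q < m\<close> by blast
qed

end

lemma hyperbolic_unit_poly_unit_root_family:
  assumes P: "hyperbolic_unit_poly P S" and "0 < card S"
  obtains \<rho> where "unit_root_family P (card S) \<rho>"
proof -
  have "finite S" using P by (simp add: hyperbolic_unit_poly_def)
  then obtain \<rho> where "bij_betw \<rho> {..<card S} S"
    using ex_bij_betw_nat_finite[of S] by (auto simp: atLeast0LessThan)
  then have "inj_on \<rho> {..<card S}" and "\<And>a. a < card S \<Longrightarrow> \<rho> a \<in> S"
    by (auto simp: bij_betw_def)
  then have "unit_root_family P (card S) \<rho>"
    using P \<open>0 < card S\<close> by unfold_locales (auto simp: hyperbolic_unit_poly_def)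
  then show thesis ..
qed

section \<open>Block diagonal matrices\<close>

lemma sum_lessThan_mult_split:
  fixes f :: "nat \<Rightarrow> 'a::comm_monoid_add"
  shows "(\<Sum>n<A * B. f n) = (\<Sum>i<A. \<Sum>t<B. f (i * B + t))"
proof -
  have "(\<Sum>n<A * B. f n) = (\<Sum>i<A. sum f {i * B..<i * B + B})"
    using sum.nat_group[of f B A] by simp
  also have "\<dots> = (\<Sum>i<A. \<Sum>t<B. f (i * B + t))"
  proof (rule sum.cong[OF refl])
    fix i
    have "sum f {i * B..<i * B + B} = sum f {0 + i * B..<B + i * B}"
      by (simp add: add.commute)
    also have "\<dots> = (\<Sum>t\<in>{0..<B}. f (t + i * B))"
      by (rule sum.shift_bounds_nat_ivl)
    finally show "sum f {i * B..<i * B + B} = (\<Sum>t<B. f (i * B + t))"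
      by (simp add: atLeast0LessThan add.commute)
  qed
  finally show ?thesis .
qed

lemma mult_add_less_mult: "i < A \<Longrightarrow> t < B \<Longrightarrow> i * B + t < A * (B::nat)"
proof -
  assume "i < A" "t < B"
  then have "i * B + t < Suc i * B" by simp
  also have "\<dots> \<le> A * B" using \<open>i < A\<close> by (intro mult_right_mono) auto
  finally show ?thesis .
qed

definition block_diag_mat :: "nat \<Rightarrow> nat \<Rightarrow> (nat \<Rightarrow> nat \<Rightarrow> nat \<Rightarrow> 'a::zero) \<Rightarrow> 'a mat" where
  "block_diag_mat D m B = mat (D * m) (D * m)
     (\<lambda>(p, q). if p div m = q div m then B (p div m) (p mod m) (q mod m) else 0)"

lemma block_diag_mat_carrier: "block_diag_mat D m B \<in> carrier_mat (D * m) (D * m)"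
  by (simp add: block_diag_mat_def)

lemma dim_block_diag_mat [simp]:
  "dim_row (block_diag_mat D m B) = D * m" "dim_col (block_diag_mat D m B) = D * m"
  by (simp_all add: block_diag_mat_def)

lemma block_diag_mat_cong:
  "(\<And>i p q. i < D \<Longrightarrow> p < m \<Longrightarrow> q < m \<Longrightarrow> B i p q = B' i p q) \<Longrightarrow>
    block_diag_mat D m B = block_diag_mat D m B'"
proof (rule eq_matI)
  fix p q assume "p < dim_row (block_diag_mat D m B')" and "q < dim_col (block_diag_mat D m B')"
  then have p: "p < D * m" and q: "q < D * m" by (simp_all add: block_diag_mat_def)
  then have "0 < m" by (cases m) auto
  assume "\<And>i p q. i < D \<Longrightarrow> p < m \<Longrightarrow> q < m \<Longrightarrow> B i p q = B' i p q"
  with p q \<open>0 < m\<close> show "block_diag_mat D m B $$ (p, q) = block_diag_mat D m B' $$ (p, q)"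
    by (simp add: block_diag_mat_def less_mult_imp_div_less)
qed (simp_all add: block_diag_mat_def)

lemma block_diag_mat_index:
  assumes "i < D" "t < m" "i' < D" "t' < m"
  shows "block_diag_mat D m B $$ (i * m + t, i' * m + t') = (if i = i' then B i t t' else 0)"
  using assms mult_add_less_mult[of i D t m] mult_add_less_mult[of i' D t' m]
  by (simp add: block_diag_mat_def)

lemma block_diag_mat_mult:
  fixes B B' :: "nat \<Rightarrow> nat \<Rightarrow> nat \<Rightarrow> 'a::comm_semiring_0"
  shows "block_diag_mat D m B * block_diag_mat D m B' =
    block_diag_mat D m (\<lambda>i p q. \<Sum>t<m. B i p t * B' i t q)"
proof (rule eq_matI)
  fix p q assume "p < dim_row (block_diag_mat D m (\<lambda>i p q. \<Sum>t<m. B i p t * B' i t q))"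
    and "q < dim_col (block_diag_mat D m (\<lambda>i p q. \<Sum>t<m. B i p t * B' i t q))"
  then have p: "p < D * m" and q: "q < D * m" by (simp_all add: block_diag_mat_def)
  then have "0 < m" by (cases m) auto
  define i j where "i = p div m" and "j = q div m"
  have i: "i < D" and j: "j < D" and p': "p = i * m + p mod m" and q': "q = j * m + q mod m"
    using p q by (simp_all add: i_def j_def less_mult_imp_div_less)
  have "(block_diag_mat D m B * block_diag_mat D m B') $$ (p, q) =
      (\<Sum>n<D * m. block_diag_mat D m B $$ (p, n) * block_diag_mat D m B' $$ (n, q))"
    using p q by (simp add: block_diag_mat_def scalar_prod_def atLeast0LessThan)
  also have "\<dots> = (\<Sum>k<D. \<Sum>t<m. block_diag_mat D m B $$ (i * m + p mod m, k * m + t) *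
      block_diag_mat D m B' $$ (k * m + t, j * m + q mod m))"
    by (subst p', subst q', rule sum_lessThan_mult_split)
  also have "\<dots> = (\<Sum>k<D. if k = i \<and> k = j then \<Sum>t<m. B i (p mod m) t * B' i t (q mod m) else 0)"
  proof (rule sum.cong[OF refl])
    fix k assume "k \<in> {..<D}"
    then show "(\<Sum>t<m. block_diag_mat D m B $$ (i * m + p mod m, k * m + t) *
        block_diag_mat D m B' $$ (k * m + t, j * m + q mod m)) =
      (if k = i \<and> k = j then \<Sum>t<m. B i (p mod m) t * B' i t (q mod m) else 0)"
      using i j \<open>0 < m\<close> by (cases "k = i"; cases "k = j") (simp_all add: block_diag_mat_index)
  qed
  also have "\<dots> = (if i = j then \<Sum>t<m. B i (p mod m) t * B' i t (q mod m) else 0)"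
    using i by (cases "i = j") (auto intro!: sum.neutral)
  also have "\<dots> = block_diag_mat D m (\<lambda>i p q. \<Sum>t<m. B i p t * B' i t q) $$ (p, q)"
    using p q by (simp add: block_diag_mat_def i_def j_def)
  finally show "(block_diag_mat D m B * block_diag_mat D m B') $$ (p, q) =
      block_diag_mat D m (\<lambda>i p q. \<Sum>t<m. B i p t * B' i t q) $$ (p, q)" .
qed (simp_all add: block_diag_mat_def)

lemma block_diag_mat_delta: "block_diag_mat D m (\<lambda>i p q. of_bool (p = q)) = 1\<^sub>m (D * m)"
proof (rule eq_matI)
  fix p q assume "p < dim_row (1\<^sub>m (D * m))" and "q < dim_col (1\<^sub>m (D * m))"
  moreover have "p div m = q div m \<and> p mod m = q mod m \<longleftrightarrow> p = q"
    by (metis div_mult_mod_eq)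
  ultimately show "block_diag_mat D m (\<lambda>i p q. of_bool (p = q)) $$ (p, q) = 1\<^sub>m (D * m) $$ (p, q)"
    by (simp add: block_diag_mat_def, blast)
qed (simp_all add: block_diag_mat_def)

lemma block_diag_mat_eigenvector:
  fixes B :: "nat \<Rightarrow> nat \<Rightarrow> nat \<Rightarrow> 'a::comm_ring_1"
  assumes "v \<in> carrier_vec (D * m)" and "block_diag_mat D m B *\<^sub>v v = z \<cdot>\<^sub>v v"
    and "i < D" and "p < m"
  shows "(\<Sum>q<m. B i p q * v $ (i * m + q)) = z * v $ (i * m + p)"
proof -
  have "i * m + p < D * m"
    using assms mult_add_less_mult by blast
  then have "z * v $ (i * m + p) = (block_diag_mat D m B *\<^sub>v v) $ (i * m + p)"
    using assms by simp
  also have "\<dots> = (\<Sum>n<D * m. block_diag_mat D m B $$ (i * m + p, n) * v $ n)"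
    using assms(1) \<open>i * m + p < D * m\<close> block_diag_mat_carrier[of D m B]
    by (auto simp: scalar_prod_def atLeast0LessThan intro!: sum.cong)
  also have "\<dots> = (\<Sum>k<D. \<Sum>q<m. block_diag_mat D m B $$ (i * m + p, k * m + q) * v $ (k * m + q))"
    by (rule sum_lessThan_mult_split)
  also have "\<dots> = (\<Sum>k<D. if k = i then \<Sum>q<m. B i p q * v $ (i * m + q) else 0)"
    using assms by (intro sum.cong refl) (auto simp: block_diag_mat_index)
  also have "\<dots> = (\<Sum>q<m. B i p q * v $ (i * m + q))"
    using \<open>i < D\<close> by simp
  finally show ?thesis by simp
qed

section \<open>Bases adapted to a grading\<close>

lemma span_remove_dependent:
  fixes u :: "'i \<Rightarrow> nat \<Rightarrow> 'a::field"
  assumes "finite I" and "x0 \<in> I" and "c x0 \<noteq> 0" and dep: "\<And>n. (\<Sum>x\<in>I. c x * u x n) = 0"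
  shows "\<exists>c'. \<forall>n. (\<Sum>x\<in>I. b x * u x n) = (\<Sum>x\<in>I - {x0}. c' x * u x n)"
proof -
  have split: "(\<Sum>x\<in>I. f x) = f x0 + (\<Sum>x\<in>I - {x0}. f x)" for f :: "'i \<Rightarrow> 'a"
    using assms(1,2) by (simp add: sum.remove)
  have u_x0: "u x0 n = - (\<Sum>x\<in>I - {x0}. (c x / c x0) * u x n)" for n
  proof -
    have "c x0 * u x0 n + (\<Sum>x\<in>I - {x0}. c x * u x n) = 0"
      using dep[of n] split[of "\<lambda>x. c x * u x n"] by simp
    then have "c x0 * u x0 n = - (\<Sum>x\<in>I - {x0}. c x * u x n)"
      by (simp add: eq_neg_iff_add_eq_0)
    then have "u x0 n = - (\<Sum>x\<in>I - {x0}. c x * u x n) / c x0"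
      using \<open>c x0 \<noteq> 0\<close> by (simp add: field_simps)
    then show ?thesis
      by (simp add: sum_divide_distrib)
  qed
  have eq: "(\<Sum>x\<in>I. b x * u x n) = (\<Sum>x\<in>I - {x0}. (b x - b x0 * (c x / c x0)) * u x n)" for n
    unfolding split[of "\<lambda>x. b x * u x n"] u_x0
    by (simp add: sum_distrib_left sum_subtractf algebra_simps)
  show ?thesis
    by (intro exI[of _ "\<lambda>x. b x - b x0 * (c x / c x0)"] allI) (rule eq)
qed

lemma exists_indep_spanning_subfamily:
  fixes u :: "'i \<Rightarrow> nat \<Rightarrow> 'a::field"
  assumes "finite I"
  shows "\<exists>J\<subseteq>I. (\<forall>c. (\<forall>n. (\<Sum>x\<in>J. c x * u x n) = 0) \<longrightarrow> (\<forall>x\<in>J. c x = 0)) \<and>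
           (\<forall>c. \<exists>c'. \<forall>n. (\<Sum>x\<in>I. c x * u x n) = (\<Sum>x\<in>J. c' x * u x n))"
  using assms
proof (induction I rule: finite_psubset_induct)
  case (psubset I)
  show ?case
  proof (cases "\<forall>c. (\<forall>n. (\<Sum>x\<in>I. c x * u x n) = 0) \<longrightarrow> (\<forall>x\<in>I. c x = 0)")
    case True
    then show ?thesis by (intro exI[of _ I]) auto
  next
    case False
    then obtain c x0 where dep: "\<forall>n. (\<Sum>x\<in>I. c x * u x n) = 0" and x0: "x0 \<in> I" "c x0 \<noteq> 0"
      by auto
    have "I - {x0} \<subset> I" using x0 by auto
    obtain J where "J \<subseteq> I - {x0}"
      and indep: "\<forall>c. (\<forall>n. (\<Sum>x\<in>J. c x * u x n) = 0) \<longrightarrow> (\<forall>x\<in>J. c x = 0)"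
      and span: "\<forall>c. \<exists>c'. \<forall>n. (\<Sum>x\<in>I - {x0}. c x * u x n) = (\<Sum>x\<in>J. c' x * u x n)"
      using psubset.IH[OF \<open>I - {x0} \<subset> I\<close>] by blast
    have "\<exists>c'. \<forall>n. (\<Sum>x\<in>I. b x * u x n) = (\<Sum>x\<in>J. c' x * u x n)" for b
    proof -
      obtain c' where "\<forall>n. (\<Sum>x\<in>I. b x * u x n) = (\<Sum>x\<in>I - {x0}. c' x * u x n)"
        using span_remove_dependent[where c = c and u = u and b = b, OF psubset.hyps x0 dep[rule_format]]
        by blast
      moreover obtain c'' where "\<forall>n. (\<Sum>x\<in>I - {x0}. c' x * u x n) = (\<Sum>x\<in>J. c'' x * u x n)"
        using span[rule_format, of c'] by blast
      ultimately show ?thesis by auto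
    qed
    with \<open>J \<subseteq> I - {x0}\<close> show ?thesis
    proof (intro exI[of _ J] conjI)
      show "J \<subseteq> I" using \<open>J \<subseteq> I - {x0}\<close> by auto
    qed (use indep in blast)+
  qed
qed

lemma subsp_sum:
  assumes "subsp d V" and "finite S" and "\<And>x. x \<in> S \<Longrightarrow> f x \<in> V"
  shows "(\<lambda>n. \<Sum>x\<in>S. a x * f x n) \<in> V"
  using assms(2,3)
proof (induction S rule: finite_induct)
  case empty
  then show ?case using assms(1) unfolding subsp_def by simp
next
  case (insert x F)
  then have "vadd (smul (a x) (f x)) (\<lambda>n. \<Sum>x\<in>F. a x * f x n) \<in> V"
    using assms(1) unfolding subsp_def by auto
  then show ?case using insert by (simp add: vadd_def smul_def)
qed

locale graded_space =
  fixes d K :: nat and V :: "nat \<Rightarrow> (nat \<Rightarrow> 'a::field) set"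
  assumes subspace: "\<And>p. p \<in> {1..K} \<Longrightarrow> subsp d (V p)"
    and unique_decomp: "\<And>x. x \<in> vecs d \<Longrightarrow>
      \<exists>!w. (\<forall>p. w p \<in> (if p \<in> {1..K} then V p else {\<lambda>_. 0})) \<and> x = vsum w {1..K}"
begin

definition grade_decomp :: "(nat \<Rightarrow> 'a) \<Rightarrow> (nat \<Rightarrow> nat \<Rightarrow> 'a) \<Rightarrow> bool" where
  "grade_decomp x w \<longleftrightarrow> (\<forall>p. w p \<in> (if p \<in> {1..K} then V p else {\<lambda>_. 0})) \<and> x = vsum w {1..K}"

lemma grade_decomp_unique:
  "x \<in> vecs d \<Longrightarrow> grade_decomp x w \<Longrightarrow> grade_decomp x w' \<Longrightarrow> w = w'"
  using unique_decomp unfolding grade_decomp_def by blast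

lemma grade_decomp_homogeneous:
  assumes "p \<in> {1..K}" and "y \<in> V p"
  shows "grade_decomp y (\<lambda>q. if q = p then y else (\<lambda>_. 0))"
  unfolding grade_decomp_def
proof
  show "\<forall>q. (if q = p then y else (\<lambda>_. 0)) \<in> (if q \<in> {1..K} then V q else {\<lambda>_. 0})"
    using assms subspace unfolding subsp_def by auto
  have "vsum (\<lambda>q. if q = p then y else (\<lambda>_. 0)) {1..K} n = (\<Sum>q\<in>{1..K}. if q = p then y n else 0)" for n
    unfolding vsum_def by (intro sum.cong) auto
  then show "y = vsum (\<lambda>q. if q = p then y else (\<lambda>_. 0)) {1..K}"
    using assms(1) by auto
qed

lemma homogeneous_vecs: "p \<in> {1..K} \<Longrightarrow> y \<in> V p \<Longrightarrow> y \<in> vecs d"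
  using subspace unfolding subsp_def by blast

text \<open>\<open>u (p, k)\<close> is the degree-\<open>p\<close> component of the \<open>k\<close>-th unit vector.\<close>
lemma homogeneous_spanning_family:
  obtains u where "\<And>x. x \<in> {1..K} \<times> {..<d} \<Longrightarrow> u x \<in> V (fst x)"
    and "\<And>y n. y \<in> vecs d \<Longrightarrow> y n = (\<Sum>x\<in>{1..K} \<times> {..<d}. y (snd x) * u x n)"
proof -
  define e where "e k = (\<lambda>n::nat. of_bool (n = k) :: 'a)" for k :: nat
  have "e k \<in> vecs d" if "k < d" for k
    using that unfolding e_def vecs_def by auto
  then have "\<forall>k. \<exists>w. k < d \<longrightarrow> grade_decomp (e k) w"
    using unique_decomp unfolding grade_decomp_def by metis
  then obtain w where w: "\<And>k. k < d \<Longrightarrow> grade_decomp (e k) (w k)"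
    by metis
  define u where "u x = w (snd x) (fst x)" for x
  show thesis
  proof
    show "u x \<in> V (fst x)" if "x \<in> {1..K} \<times> {..<d}" for x
      using that w[of "snd x"] unfolding u_def grade_decomp_def by (auto split: if_splits)
    show "y n = (\<Sum>x\<in>{1..K} \<times> {..<d}. y (snd x) * u x n)" if "y \<in> vecs d" for y n
    proof -
      have "y n = (\<Sum>k<d. y k * e k n)"
        using that unfolding e_def vecs_def by (cases "n < d") auto
      also have "\<dots> = (\<Sum>k<d. \<Sum>p\<in>{1..K}. y k * w k p n)"
        using w unfolding grade_decomp_def by (simp add: vsum_def sum_distrib_left)
      also have "\<dots> = (\<Sum>x\<in>{1..K} \<times> {..<d}. y (snd x) * u x n)"
        unfolding u_def by (subst sum.swap) (simp add: sum.cartesian_product case_prod_beta)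
      finally show ?thesis .
    qed
  qed
qed

text \<open>This is where the uniqueness of the homogeneous decomposition is used.\<close>
lemma homogeneous_coeff_vanish:
  assumes J: "finite J" "\<And>x. x \<in> J \<Longrightarrow> fst x \<in> {1..K} \<and> u x \<in> V (fst x)"
    and indep: "\<And>c. \<forall>n. (\<Sum>x\<in>J. c x * u x n) = 0 \<Longrightarrow> \<forall>x\<in>J. c x = 0"
    and y: "p \<in> {1..K}" "y \<in> V p" and coords: "\<And>n. y n = (\<Sum>x\<in>J. a x * u x n)"
    and x0: "x0 \<in> J" "fst x0 \<noteq> p"
  shows "a x0 = 0"
proof -
  define w where "w q = (if q \<in> {1..K} then (\<lambda>n. \<Sum>x\<in>{x\<in>J. fst x = q}. a x * u x n) else (\<lambda>_. 0))" for q
  have "grade_decomp y w"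
    unfolding grade_decomp_def
  proof
    show "\<forall>q. w q \<in> (if q \<in> {1..K} then V q else {\<lambda>_. 0})"
      using J subspace by (auto simp: w_def intro!: subsp_sum)
    have "vsum w {1..K} n = (\<Sum>x\<in>J. a x * u x n)" for n
      using J by (auto simp: vsum_def w_def intro!: sum.group)
    then show "y = vsum w {1..K}" using coords by auto
  qed
  then have "w = (\<lambda>q. if q = p then y else (\<lambda>_. 0))"
    by (rule grade_decomp_unique[OF homogeneous_vecs[OF y] _ grade_decomp_homogeneous[OF y]])
  then have "w (fst x0) = (\<lambda>_. 0)"
    using x0(2) by simp
  then have "(\<Sum>x\<in>{x\<in>J. fst x = fst x0}. a x * u x n) = 0" for n
    using J(2) x0(1) unfolding w_def by (simp add: fun_eq_iff)
  moreover have "(\<Sum>x\<in>J. (if fst x = fst x0 then a x else 0) * u x n) =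
      (\<Sum>x\<in>{x\<in>J. fst x = fst x0}. a x * u x n)" for n
    using J(1) by (simp add: sum.inter_filter) (intro sum.cong refl, simp)
  ultimately have "\<forall>n. (\<Sum>x\<in>J. (if fst x = fst x0 then a x else 0) * u x n) = 0"
    by simp
  then show ?thesis
    using indep x0(1) by fastforce
qed

end

lemma indep_family_coords:
  fixes u :: "'i \<Rightarrow> nat \<Rightarrow> 'a::field"
  assumes span: "\<And>k. k < d \<Longrightarrow> \<exists>C. \<forall>n. of_bool (n = k) = (\<Sum>x\<in>J. C x * u x n)"
  obtains C where "\<And>y n. y \<in> vecs d \<Longrightarrow> y n = (\<Sum>x\<in>J. (\<Sum>k<d. C k x * y k) * u x n)"
proof -
  from span have "\<forall>k\<in>{..<d}. \<exists>C. \<forall>n. of_bool (n = k) = (\<Sum>x\<in>J. C x * u x n)"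
    by blast
  from bchoice[OF this] obtain C where C: "\<And>k n. k < d \<Longrightarrow> of_bool (n = k) = (\<Sum>x\<in>J. C k x * u x n)"
    by blast
  have "y n = (\<Sum>x\<in>J. (\<Sum>k<d. C k x * y k) * u x n)" if "y \<in> vecs d" for y n
  proof -
    have "y n = (\<Sum>k<d. y k * of_bool (n = k))"
      using that unfolding vecs_def by (cases "n < d") auto
    also have "\<dots> = (\<Sum>k<d. \<Sum>x\<in>J. y k * (C k x * u x n))"
      by (simp add: C sum_distrib_left)
    also have "\<dots> = (\<Sum>x\<in>J. \<Sum>k<d. y k * (C k x * u x n))"
      by (rule sum.swap)
    also have "\<dots> = (\<Sum>x\<in>J. (\<Sum>k<d. C k x * y k) * u x n)"
      by (simp add: sum_distrib_left sum_distrib_right mult_ac)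
    finally show ?thesis .
  qed
  then show thesis ..
qed

lemma indep_coeffs_unique:
  fixes u :: "'i \<Rightarrow> nat \<Rightarrow> 'a::field"
  assumes indep: "\<And>c. \<forall>n. (\<Sum>x\<in>J. c x * u x n) = 0 \<Longrightarrow> \<forall>x\<in>J. c x = 0"
    and "finite J" and eq: "\<And>n. (\<Sum>x\<in>J. a x * u x n) = (\<Sum>x\<in>J. b x * u x n)" and "x \<in> J"
  shows "a x = b x"
proof -
  have "\<forall>n. (\<Sum>x\<in>J. (a x - b x) * u x n) = 0"
    using eq by (simp add: left_diff_distrib sum_subtractf)
  with indep \<open>x \<in> J\<close> show ?thesis by fastforce
qed

text \<open>A basis \<open>v\<close> of homogeneous vectors, \<open>v\<^sub>i\<close> of degree \<open>g i\<close>, with dual basis \<open>W\<close>.\<close>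
locale graded_basis =
  fixes d :: nat and c :: "nat \<Rightarrow> nat \<Rightarrow> nat \<Rightarrow> 'a::field" and D :: nat
    and v W :: "nat \<Rightarrow> nat \<Rightarrow> 'a" and g :: "nat \<Rightarrow> nat"
  assumes basis_vecs: "\<And>i. i < D \<Longrightarrow> v i \<in> vecs d"
    and grade_pos: "\<And>i. i < D \<Longrightarrow> 1 \<le> g i"
    and dual: "\<And>i j. i < D \<Longrightarrow> j < D \<Longrightarrow> (\<Sum>k<d. W i k * v j k) = of_bool (i = j)"
    and complete: "\<And>k k'. k < d \<Longrightarrow> k' < d \<Longrightarrow> (\<Sum>i<D. v i k * W i k') = of_bool (k = k')"
    and bracket_grade: "\<And>i j l. i < D \<Longrightarrow> j < D \<Longrightarrow> l < D \<Longrightarrow>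
      (\<Sum>k<d. W l k * sc_bracket d c (v i) (v j) k) \<noteq> 0 \<Longrightarrow> g l = g i + g j"

lemma (in graded_basis) basis_expansion:
  assumes "y \<in> vecs d"
  shows "y k = (\<Sum>l<D. (\<Sum>k'<d. W l k' * y k') * v l k)"
proof (cases "k < d")
  case True
  have "(\<Sum>l<D. (\<Sum>k'<d. W l k' * y k') * v l k) = (\<Sum>l<D. \<Sum>k'<d. v l k * W l k' * y k')"
    by (simp add: sum_distrib_left sum_distrib_right mult_ac)
  also have "\<dots> = (\<Sum>k'<d. (\<Sum>l<D. v l k * W l k') * y k')"
    by (subst sum.swap) (simp add: sum_distrib_right)
  also have "\<dots> = y k"
    using True by (simp add: complete)
  finally show ?thesis ..
next
  case False
  then show ?thesis
    using assms basis_vecs unfolding vecs_def by simp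
qed

lemma (in graded_space) homogeneous_basis:
  obtains J :: "(nat \<times> nat) set" and u C where "finite J"
    and "\<And>x. x \<in> J \<Longrightarrow> fst x \<in> {1..K} \<and> u x \<in> V (fst x)"
    and "\<And>c. \<forall>n. (\<Sum>x\<in>J. c x * u x n) = 0 \<Longrightarrow> \<forall>x\<in>J. c x = 0"
    and "\<And>y n. y \<in> vecs d \<Longrightarrow> y n = (\<Sum>x\<in>J. (\<Sum>k<d. C k x * y k) * u x n)"
proof -
  obtain u where u: "\<And>x. x \<in> {1..K} \<times> {..<d} \<Longrightarrow> u x \<in> V (fst x)"
    and span: "\<And>y n. y \<in> vecs d \<Longrightarrow> y n = (\<Sum>x\<in>{1..K} \<times> {..<d}. y (snd x) * u x n)"
    by (rule homogeneous_spanning_family) blast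
  obtain J where J: "J \<subseteq> {1..K} \<times> {..<d}"
    and indep: "\<forall>c. (\<forall>n. (\<Sum>x\<in>J. c x * u x n) = 0) \<longrightarrow> (\<forall>x\<in>J. c x = 0)"
    and span_J: "\<forall>c. \<exists>c'. \<forall>n. (\<Sum>x\<in>{1..K} \<times> {..<d}. c x * u x n) = (\<Sum>x\<in>J. c' x * u x n)"
    using exists_indep_spanning_subfamily[of "{1..K} \<times> {..<d}" u] by blast
  have "\<exists>C. \<forall>n. of_bool (n = k) = (\<Sum>x\<in>J. C x * u x n)" if "k < d" for k
  proof -
    have "(\<lambda>n. of_bool (n = k)) \<in> vecs d"
      using that by (simp add: vecs_def)
    from span[OF this]
    have unit: "of_bool (n = k) = (\<Sum>x\<in>{1..K} \<times> {..<d}. of_bool (snd x = k) * u x n)" for n .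
    obtain c' where "\<forall>n. (\<Sum>x\<in>{1..K} \<times> {..<d}. of_bool (snd x = k) * u x n) = (\<Sum>x\<in>J. c' x * u x n)"
      using span_J[rule_format, of "\<lambda>x. of_bool (snd x = k)"] by blast
    with unit show ?thesis by (metis (no_types))
  qed
  then obtain C where "\<And>y n. y \<in> vecs d \<Longrightarrow> y n = (\<Sum>x\<in>J. (\<Sum>k<d. C k x * y k) * u x n)"
    using indep_family_coords by blast
  moreover have "finite J"
    using J by (rule finite_subset) simp
  moreover have "fst x \<in> {1..K} \<and> u x \<in> V (fst x)" if "x \<in> J" for x
    using u[of x] that J by (auto simp: mem_Times_iff)
  ultimately show thesis
    using that indep[THEN spec, THEN mp] by blast
qed

lemma (in graded_space) graded_basis_exists:
  fixes c :: "nat \<Rightarrow> nat \<Rightarrow> nat \<Rightarrow> 'a"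
  assumes bracket: "\<And>p q x y. p \<in> {1..K} \<Longrightarrow> q \<in> {1..K} \<Longrightarrow> x \<in> V p \<Longrightarrow> y \<in> V q \<Longrightarrow>
      sc_bracket d c x y \<in> (if p + q \<le> K then V (p + q) else {\<lambda>_. 0})"
  obtains D v W g where "graded_basis d c D v W g"
proof -
  obtain J :: "(nat \<times> nat) set" and u C where J: "finite J"
    "\<And>x. x \<in> J \<Longrightarrow> fst x \<in> {1..K} \<and> u x \<in> V (fst x)"
    and indep: "\<And>c. \<forall>n. (\<Sum>x\<in>J. c x * u x n) = 0 \<Longrightarrow> \<forall>x\<in>J. c x = 0"
    and coords: "\<And>y n. y \<in> vecs d \<Longrightarrow> y n = (\<Sum>x\<in>J. (\<Sum>k<d. C k x * y k) * u x n)"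
    by (rule homogeneous_basis) blast
  obtain h where h: "bij_betw h {..<card J} J"
    using ex_bij_betw_nat_finite[OF J(1)] by (auto simp: atLeast0LessThan)
  then have hJ: "\<And>i. i < card J \<Longrightarrow> h i \<in> J"
    and h_inj: "\<And>i j. i < card J \<Longrightarrow> j < card J \<Longrightarrow> h i = h j \<longleftrightarrow> i = j"
    by (auto simp: bij_betw_def inj_on_eq_iff)
  define v where "v i = u (h i)" for i
  define W where "W i k = C k (h i)" for i k
  have v: "\<And>i. i < card J \<Longrightarrow> v i \<in> V (fst (h i))" and grade: "\<And>i. i < card J \<Longrightarrow> fst (h i) \<in> {1..K}"
    using J hJ unfolding v_def by blast+
  then have v_vecs: "\<And>i. i < card J \<Longrightarrow> v i \<in> vecs d"
    using homogeneous_vecs by blast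
  show thesis
  proof (rule that, unfold_locales)
    show "v i \<in> vecs d" and "1 \<le> fst (h i)" if "i < card J" for i
      using v_vecs that grade by auto
  next
    fix i j assume i: "i < card J" and j: "j < card J"
    have "(\<Sum>x\<in>J. (\<Sum>k<d. C k x * v j k) * u x n) = (\<Sum>x\<in>J. of_bool (x = h j) * u x n)" for n
      using coords[OF v_vecs[OF j], symmetric] J(1) hJ[OF j] by (simp add: v_def)
    from indep_coeffs_unique[where a = "\<lambda>x. \<Sum>k<d. C k x * v j k" and b = "\<lambda>x. of_bool (x = h j)",
        OF indep J(1) this hJ[OF i]]
    show "(\<Sum>k<d. W i k * v j k) = of_bool (i = j)"
      unfolding W_def using h_inj[OF i j] by simp
  next
    fix k k' assume k: "k < d" and k': "k' < d"
    have "(\<lambda>n. of_bool (n = k')) \<in> vecs d"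
      using k' by (simp add: vecs_def)
    then have "of_bool (k = k') = (\<Sum>x\<in>J. (\<Sum>l<d. C l x * of_bool (l = k')) * u x k)"
      by (rule coords)
    also have "\<dots> = (\<Sum>i<card J. v i k * W i k')"
      using k' sum.reindex_bij_betw[OF h, of "\<lambda>x. C k' x * u x k"] by (simp add: v_def W_def mult.commute)
    finally show "(\<Sum>i<card J. v i k * W i k') = of_bool (k = k')" by simp
  next
    fix i j l assume i: "i < card J" and j: "j < card J" and l: "l < card J"
      and nonzero: "(\<Sum>k<d. W l k * sc_bracket d c (v i) (v j) k) \<noteq> 0"
    define y where "y = sc_bracket d c (v i) (v j)"
    have y: "y \<in> (if fst (h i) + fst (h j) \<le> K then V (fst (h i) + fst (h j)) else {\<lambda>_. 0})"
      unfolding y_def using bracket v i j grade by blast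
    with nonzero have "fst (h i) + fst (h j) \<le> K"
      by (auto simp: y_def split: if_splits)
    with y grade[OF i] have p: "fst (h i) + fst (h j) \<in> {1..K}" and yV: "y \<in> V (fst (h i) + fst (h j))"
      by auto
    have "(\<Sum>k<d. C k (h l) * y k) = 0" if "fst (h l) \<noteq> fst (h i) + fst (h j)"
      by (rule homogeneous_coeff_vanish[OF J indep p yV coords[OF homogeneous_vecs[OF p yV]] hJ[OF l] that])
    with nonzero show "fst (h l) = fst (h i) + fst (h j)"
      unfolding W_def y_def by auto
  qed
qed

lemma graded_sc_graded_basis:
  fixes c :: "nat \<Rightarrow> nat \<Rightarrow> nat \<Rightarrow> 'a::field"
  assumes "graded_sc d c"
  obtains D v W g where "graded_basis d c D v W g"
  using assms unfolding graded_sc_def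
proof (elim exE conjE)
  fix K :: nat and V :: "nat \<Rightarrow> (nat \<Rightarrow> 'a) set"
  assume sub: "\<forall>i\<in>{1..K}. subsp d (V i)"
    and decomp: "\<forall>x\<in>vecs d. \<exists>!w. (\<forall>i. w i \<in> (if i \<in> {1..K} then V i else {\<lambda>_. 0})) \<and>
      x = vsum w {1..K}"
    and bracket: "\<forall>i\<in>{1..K}. \<forall>j\<in>{1..K}. \<forall>x\<in>V i. \<forall>y\<in>V j.
      sc_bracket d c x y \<in> (if i + j \<le> K then V (i + j) else {\<lambda>_. 0})"
  have "graded_space d K V"
    by (unfold_locales; use sub decomp in \<open>simp add: Ball_def\<close>)
  moreover have "\<And>p q x y. p \<in> {1..K} \<Longrightarrow> q \<in> {1..K} \<Longrightarrow> x \<in> V p \<Longrightarrow> y \<in> V q \<Longrightarrow>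
      sc_bracket d c x y \<in> (if p + q \<le> K then V (p + q) else {\<lambda>_. 0})"
    using bracket by blast
  ultimately show thesis
    using that by (rule graded_space.graded_basis_exists)
qed

section \<open>Direct sums\<close>

lemma sc_bracket_bilinear:
  fixes C :: "nat \<Rightarrow> nat \<Rightarrow> nat \<Rightarrow> 'a::field"
  shows "sc_bracket N C (\<lambda>k. \<Sum>n\<in>S. a n * x n k) (\<lambda>k. \<Sum>n'\<in>S'. b n' * y n' k) =
    (\<lambda>k. \<Sum>n\<in>S. \<Sum>n'\<in>S'. a n * b n' * sc_bracket N C (x n) (y n') k)"
proof
  fix k
  have "(\<Sum>n\<in>S. a n * x n i) * (\<Sum>n'\<in>S'. b n' * y n' j) * C i j k =
      (\<Sum>n\<in>S. \<Sum>n'\<in>S'. a n * b n' * (x n i * y n' j * C i j k))" for i j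
  proof -
    have "(\<Sum>n\<in>S. a n * x n i) * (\<Sum>n'\<in>S'. b n' * y n' j) =
        (\<Sum>n\<in>S. \<Sum>n'\<in>S'. (a n * x n i) * (b n' * y n' j))"
      by (rule sum_product)
    then show ?thesis by (simp add: sum_distrib_left sum_distrib_right mult_ac)
  qed
  then have "(\<Sum>i<N. \<Sum>j<N. (\<Sum>n\<in>S. a n * x n i) * (\<Sum>n'\<in>S'. b n' * y n' j) * C i j k) =
      (\<Sum>i<N. \<Sum>j<N. \<Sum>n\<in>S. \<Sum>n'\<in>S'. a n * b n' * (x n i * y n' j * C i j k))"
    by simp
  also have "\<dots> = (\<Sum>n\<in>S. \<Sum>n'\<in>S'. \<Sum>i<N. \<Sum>j<N. a n * b n' * (x n i * y n' j * C i j k))"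
    by (simp only: sum.swap[of _ "{..<N}" S] sum.swap[of _ "{..<N}" S'])
  finally show "sc_bracket N C (\<lambda>k. \<Sum>n\<in>S. a n * x n k) (\<lambda>k. \<Sum>n'\<in>S'. b n' * y n' k) k =
      (\<Sum>n\<in>S. \<Sum>n'\<in>S'. a n * b n' * sc_bracket N C (x n) (y n') k)"
    by (simp add: sc_bracket_def sum_distrib_left)
qed

lemma sc_bracket_of_rat:
  "sc_bracket d (\<lambda>i j k. of_rat (c i j k)) (\<lambda>k. of_rat (x k)) (\<lambda>k. of_rat (y k)) =
    (\<lambda>k. of_rat (sc_bracket d c x y k))"
  unfolding sc_bracket_def by (rule ext) (simp add: of_rat_sum of_rat_mult)

lemma sc_bracket_vecs: "sc_bracket d c x y \<in> vecs d"
  unfolding sc_bracket_def vecs_def by simp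

lemma vsum_smul: "vsum (\<lambda>i. smul (a i) (b i)) S = (\<lambda>k. \<Sum>i\<in>S. a i * b i k)"
  unfolding vsum_def smul_def by simp

text \<open>\<open>tensor m d y h\<close> encodes \<open>y \<otimes> h\<close> in the sum of \<open>m\<close> copies of a \<open>d\<close>-dimensional
  space: its \<open>a\<close>-th block of coordinates is \<open>h a \<cdot> y\<close>.\<close>
definition tensor :: "nat \<Rightarrow> nat \<Rightarrow> (nat \<Rightarrow> 'a::comm_semiring_0) \<Rightarrow> (nat \<Rightarrow> 'a) \<Rightarrow> nat \<Rightarrow> 'a" where
  "tensor m d y h = (\<lambda>n. if n < m * d then y (n mod d) * h (n div d) else 0)"

lemma tensor_vecs: "tensor m d y h \<in> vecs (m * d)"
  unfolding tensor_def vecs_def by auto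

lemma tensor_index: "a < m \<Longrightarrow> k < d \<Longrightarrow> tensor m d y h (a * d + k) = y k * h a"
  unfolding tensor_def using mult_add_less_mult[of a m k d] by simp

lemma tensor_cong: "(\<And>a. a < m \<Longrightarrow> h a = h' a) \<Longrightarrow> tensor m d y h = tensor m d y h'"
  unfolding tensor_def by (intro ext) (simp add: less_mult_imp_div_less)

lemma tensor_sum_right:
  "tensor m d y (\<lambda>a. \<Sum>t\<in>S. e t * h t a) = (\<lambda>k. \<Sum>t\<in>S. e t * tensor m d y (h t) k)"
  unfolding tensor_def by (rule ext) (simp add: sum_distrib_left sum_distrib_right mult_ac)

lemma tensor_sum_left:
  "tensor m d (\<lambda>k. \<Sum>l\<in>S. e l * y l k) h = (\<lambda>k. \<Sum>l\<in>S. e l * tensor m d (y l) h k)"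
  unfolding tensor_def by (rule ext) (simp add: sum_distrib_left sum_distrib_right mult_ac)

lemma sc_bracket_dsum_tensor:
  fixes C :: "nat \<Rightarrow> nat \<Rightarrow> nat \<Rightarrow> 'a::field"
  shows "sc_bracket (m * d) (dsum_sc m d C) (tensor m d y h) (tensor m d y' h') =
    tensor m d (sc_bracket d C y y') (\<lambda>a. h a * h' a)"
proof
  fix n
  show "sc_bracket (m * d) (dsum_sc m d C) (tensor m d y h) (tensor m d y' h') n =
      tensor m d (sc_bracket d C y y') (\<lambda>a. h a * h' a) n"
  proof (cases "n < m * d")
    case False
    then show ?thesis unfolding sc_bracket_def tensor_def by simp
  next
    case True
    then have "0 < d" by (cases d) auto
    define a0 k0 where "a0 = n div d" and "k0 = n mod d"
    have a0: "a0 < m" and k0: "k0 < d"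
      using True \<open>0 < d\<close> by (simp_all add: a0_def k0_def less_mult_imp_div_less)
    have entry: "tensor m d y h (a * d + k) * tensor m d y' h' (a' * d + k') *
        dsum_sc m d C (a * d + k) (a' * d + k') n =
        (if a = a0 \<and> a' = a0 then y k * h a0 * (y' k' * h' a0) * C k k' k0 else 0)"
      if "a < m" "k < d" "a' < m" "k' < d" for a k a' k'
      using that by (auto simp: tensor_index dsum_sc_def a0_def k0_def)
    have "sc_bracket (m * d) (dsum_sc m d C) (tensor m d y h) (tensor m d y' h') n =
      (\<Sum>a<m. \<Sum>k<d. \<Sum>a'<m. \<Sum>k'<d. tensor m d y h (a * d + k) * tensor m d y' h' (a' * d + k') *
        dsum_sc m d C (a * d + k) (a' * d + k') n)"
      unfolding sc_bracket_def using True by (simp add: sum_lessThan_mult_split)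
    also have "\<dots> = (\<Sum>a<m. \<Sum>k<d. \<Sum>a'<m. \<Sum>k'<d.
        if a = a0 \<and> a' = a0 then y k * h a0 * (y' k' * h' a0) * C k k' k0 else 0)"
      by (intro sum.cong refl) (simp add: entry)
    also have "\<dots> = (\<Sum>a<m. \<Sum>a'<m. \<Sum>k<d. \<Sum>k'<d.
        if a = a0 \<and> a' = a0 then y k * h a0 * (y' k' * h' a0) * C k k' k0 else 0)"
      by (intro sum.cong refl sum.swap)
    also have "\<dots> = (\<Sum>a<m. \<Sum>a'<m. if a = a0 \<and> a' = a0 then
        (\<Sum>k<d. \<Sum>k'<d. y k * h a0 * (y' k' * h' a0) * C k k' k0) else 0)"
      by (intro sum.cong refl) auto
    also have "\<dots> = (\<Sum>k<d. \<Sum>k'<d. y k * h a0 * (y' k' * h' a0) * C k k' k0)"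
    proof -
      have "(\<Sum>a'<m. if a = a0 \<and> a' = a0 then X else 0) = (if a = a0 then X else 0)" for a and X :: 'a
        using a0 by (cases "a = a0") simp_all
      then show ?thesis using a0 by simp
    qed
    also have "\<dots> = tensor m d (sc_bracket d C y y') (\<lambda>a. h a * h' a) n"
      unfolding tensor_def sc_bracket_def using True k0 a0_def k0_def
      by (simp add: sum_distrib_left sum_distrib_right mult_ac)
    finally show ?thesis .
  qed
qed

section \<open>The Anosov rational form\<close>

locale anosov_construction = unit_root_family P m \<rho> + graded_basis d c D v W g
  for P :: "int poly" and m :: nat and \<rho> :: "nat \<Rightarrow> real"
    and d :: nat and c :: "nat \<Rightarrow> nat \<Rightarrow> nat \<Rightarrow> rat" and D :: nat
    and v W :: "nat \<Rightarrow> nat \<Rightarrow> rat" and g :: "nat \<Rightarrow> nat"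
begin

abbreviation bracket :: "(nat \<Rightarrow> real) \<Rightarrow> (nat \<Rightarrow> real) \<Rightarrow> nat \<Rightarrow> real" where
  "bracket \<equiv> sc_bracket (m * d) (\<lambda>p q r. of_rat (dsum_sc m d c p q r))"

definition vR :: "nat \<Rightarrow> nat \<Rightarrow> real" where
  "vR i k = of_rat (v i k)"

definition WR :: "nat \<Rightarrow> nat \<Rightarrow> real" where
  "WR i k = of_rat (W i k)"

lemma vR_vecs: "i < D \<Longrightarrow> vR i \<in> vecs d"
  using basis_vecs unfolding vecs_def vR_def by auto

lemma dual_real: "i < D \<Longrightarrow> j < D \<Longrightarrow> (\<Sum>k<d. WR i k * vR j k) = of_bool (i = j)"
  using arg_cong[OF dual[of i j], of "of_rat :: rat \<Rightarrow> real"]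
  by (simp add: WR_def vR_def of_rat_sum of_rat_mult)

lemma complete_real: "k < d \<Longrightarrow> k' < d \<Longrightarrow> (\<Sum>i<D. vR i k * WR i k') = of_bool (k = k')"
  using arg_cong[OF complete[of k k'], of "of_rat :: rat \<Rightarrow> real"]
  by (simp add: WR_def vR_def of_rat_sum of_rat_mult)

lemma bracket_tensor:
  "bracket (tensor m d y h) (tensor m d y' h') =
    tensor m d (sc_bracket d (\<lambda>i j k. of_rat (c i j k)) y y') (\<lambda>a. h a * h' a)"
proof -
  have "(\<lambda>p q r. of_rat (dsum_sc m d c p q r) :: real) = dsum_sc m d (\<lambda>i j k. of_rat (c i j k))"
    by (simp add: dsum_sc_def fun_eq_iff)
  then show ?thesis by (simp add: sc_bracket_dsum_tensor)
qed

text \<open>On the \<open>a\<close>-th copy, \<open>scale_map s\<close> multiplies the \<open>v\<^sub>i\<close>-coordinate by \<open>s a i\<close>.\<close>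
definition scale_map :: "(nat \<Rightarrow> nat \<Rightarrow> real) \<Rightarrow> (nat \<Rightarrow> real) \<Rightarrow> nat \<Rightarrow> real" where
  "scale_map s z = (\<lambda>N. if N < m * d then
     (\<Sum>i<D. vR i (N mod d) * s (N div d) i * (\<Sum>k<d. WR i k * z (N div d * d + k))) else 0)"

lemma scale_map_sum:
  "scale_map s (\<lambda>k. \<Sum>n\<in>S. a n * x n k) = (\<lambda>k. \<Sum>n\<in>S. a n * scale_map s (x n) k)"
  unfolding scale_map_def
  by (rule ext) (simp add: sum_distrib_left sum_distrib_right mult_ac sum.swap[of _ S])

lemma scale_map_add: "scale_map s (vadd x y) = vadd (scale_map s x) (scale_map s y)"
  unfolding scale_map_def vadd_def by (rule ext) (simp add: sum.distrib distrib_left)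

lemma scale_map_smul: "scale_map s (smul q x) = smul q (scale_map s x)"
  unfolding scale_map_def smul_def by (rule ext) (simp add: sum_distrib_left mult_ac)

lemma scale_map_tensor:
  assumes "y \<in> vecs d"
    and scale: "\<And>a i. a < m \<Longrightarrow> i < D \<Longrightarrow> (\<Sum>k<d. WR i k * y k) \<noteq> 0 \<Longrightarrow> s a i = \<sigma> a"
  shows "scale_map s (tensor m d y h) = tensor m d y (\<lambda>a. \<sigma> a * h a)"
proof
  fix N
  show "scale_map s (tensor m d y h) N = tensor m d y (\<lambda>a. \<sigma> a * h a) N"
  proof (cases "N < m * d")
    case False
    then show ?thesis unfolding scale_map_def tensor_def by simp
  next
    case True
    then have "0 < d" by (cases d) auto
    define a where "a = N div d"
    have a: "a < m" unfolding a_def using True by (simp add: less_mult_imp_div_less)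
    have "scale_map s (tensor m d y h) N = (\<Sum>i<D. vR i (N mod d) * s a i * (\<Sum>k<d. WR i k * (y k * h a)))"
      unfolding scale_map_def a_def using True by (simp add: tensor_index[OF a[unfolded a_def]])
    also have "\<dots> = (\<Sum>i<D. vR i (N mod d) * (\<sigma> a * h a) * (\<Sum>k<d. WR i k * y k))"
    proof (rule sum.cong[OF refl])
      fix i assume "i \<in> {..<D}"
      have "(\<Sum>k<d. WR i k * (y k * h a)) = (\<Sum>k<d. WR i k * y k) * h a"
        by (simp add: sum_distrib_right mult.assoc)
      then show "vR i (N mod d) * s a i * (\<Sum>k<d. WR i k * (y k * h a)) =
          vR i (N mod d) * (\<sigma> a * h a) * (\<Sum>k<d. WR i k * y k)"
        using scale[OF a, of i] \<open>i \<in> {..<D}\<close>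
        by (cases "(\<Sum>k<d. WR i k * y k) = 0") (simp_all add: mult_ac)
    qed
    also have "\<dots> = \<sigma> a * h a * (\<Sum>i<D. vR i (N mod d) * (\<Sum>k<d. WR i k * y k))"
      by (simp add: sum_distrib_left mult_ac)
    also have "\<dots> = \<sigma> a * h a * (\<Sum>k<d. (\<Sum>i<D. vR i (N mod d) * WR i k) * y k)"
      by (simp add: sum_distrib_left sum_distrib_right mult_ac sum.swap[of _ "{..<D}"])
    also have "\<dots> = \<sigma> a * h a * y (N mod d)"
      using \<open>0 < d\<close> by (simp add: complete_real)
    also have "\<dots> = tensor m d y (\<lambda>a. \<sigma> a * h a) N"
      unfolding tensor_def a_def using True by simp
    finally show ?thesis .
  qed
qed

lemma scale_map_tensor_basis:
  "j < D \<Longrightarrow> scale_map s (tensor m d (vR j) h) = tensor m d (vR j) (\<lambda>a. s a j * h a)"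
  by (rule scale_map_tensor[OF vR_vecs]) (simp_all add: dual_real split: if_splits)

lemma scale_map_inverse:
  assumes inv: "\<And>a i. a < m \<Longrightarrow> i < D \<Longrightarrow> s' a i * s a i = 1" and z: "z \<in> vecs (m * d)"
  shows "scale_map s' (scale_map s z) = z"
proof
  fix N
  show "scale_map s' (scale_map s z) N = z N"
  proof (cases "N < m * d")
    case False
    then show ?thesis using z unfolding scale_map_def vecs_def by simp
  next
    case True
    then have "0 < d" by (cases d) auto
    define a where "a = N div d"
    have a: "a < m" unfolding a_def using True by (simp add: less_mult_imp_div_less)
    define coord where "coord i = (\<Sum>k<d. WR i k * z (a * d + k))" for i
    have inner: "scale_map s z (a * d + k) = (\<Sum>j<D. vR j k * s a j * coord j)" if "k < d" for k
      unfolding scale_map_def coord_def using that mult_add_less_mult[OF a that] by simp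
    have "scale_map s' (scale_map s z) N =
        (\<Sum>i<D. vR i (N mod d) * s' a i * (\<Sum>k<d. WR i k * (\<Sum>j<D. vR j k * s a j * coord j)))"
      unfolding scale_map_def[of s' "scale_map s z"] using True a_def inner by simp
    also have "\<dots> = (\<Sum>i<D. vR i (N mod d) * s' a i * (\<Sum>j<D. (\<Sum>k<d. WR i k * vR j k) * (s a j * coord j)))"
      by (simp add: sum_distrib_left sum_distrib_right mult_ac sum.swap[of _ "{..<d}"])
    also have "\<dots> = (\<Sum>i<D. vR i (N mod d) * s' a i * (s a i * coord i))"
      by (intro sum.cong refl) (simp add: dual_real)
    also have "\<dots> = (\<Sum>i<D. vR i (N mod d) * coord i)"
      using inv a by (intro sum.cong refl) (simp add: mult.assoc[symmetric] mult.commute[of _ "s' a _"])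
    also have "\<dots> = (\<Sum>k<d. (\<Sum>i<D. vR i (N mod d) * WR i k) * z (a * d + k))"
      unfolding coord_def by (simp add: sum_distrib_left sum_distrib_right mult_ac sum.swap[of _ "{..<D}"])
    also have "\<dots> = z N"
      using \<open>0 < d\<close> unfolding a_def by (simp add: complete_real)
    finally show ?thesis .
  qed
qed

text \<open>\<open>basis_vec (i m + t) = v\<^sub>i \<otimes> \<rho>\<^sup>t\<close>, so the rational form is \<open>\<rat>-span{v\<^sub>i} \<otimes> \<rat>[\<rho>]\<close>,
  embedded in the \<open>m\<close> copies through the \<open>m\<close> real roots.\<close>
definition basis_vec :: "nat \<Rightarrow> nat \<Rightarrow> real" where
  "basis_vec n = tensor m d (vR (n div m)) (\<lambda>a. \<rho> a ^ (n mod m))"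

definition rat_form :: "(nat \<Rightarrow> real) set" where
  "rat_form = rat_span (D * m) basis_vec"

lemma basis_vec_index: "i < D \<Longrightarrow> t < m \<Longrightarrow> basis_vec (i * m + t) = tensor m d (vR i) (\<lambda>a. \<rho> a ^ t)"
  unfolding basis_vec_def by simp

lemma basis_vec_vecs: "basis_vec n \<in> vecs (m * d)"
  unfolding basis_vec_def by (rule tensor_vecs)

lemma rat_form_iff: "z \<in> rat_form \<longleftrightarrow> (\<exists>q. z = (\<lambda>k. \<Sum>n<D * m. of_rat (q n) * basis_vec n k))"
  unfolding rat_form_def rat_span_def vsum_smul by auto

lemma rat_form_vecs: "rat_form \<subseteq> vecs (m * d)"
proof
  fix x assume "x \<in> rat_form"
  then obtain q where "x = (\<lambda>k. \<Sum>n<D * m. of_rat (q n) * basis_vec n k)"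
    unfolding rat_form_iff by blast
  then show "x \<in> vecs (m * d)"
    using basis_vec_vecs by (simp add: vecs_def)
qed

lemma rat_form_lincomb:
  assumes "finite X" and "\<And>x. x \<in> X \<Longrightarrow> z x \<in> rat_form"
  shows "(\<lambda>k. \<Sum>x\<in>X. of_rat (e x) * z x k) \<in> rat_form"
proof -
  from assms(2) have "\<forall>x\<in>X. \<exists>q. z x = (\<lambda>k. \<Sum>n<D * m. of_rat (q n) * basis_vec n k)"
    unfolding rat_form_iff by blast
  from bchoice[OF this] obtain q
    where q: "\<And>x. x \<in> X \<Longrightarrow> z x = (\<lambda>k. \<Sum>n<D * m. of_rat (q x n) * basis_vec n k)"
    by blast
  have eq: "(\<lambda>k. \<Sum>x\<in>X. of_rat (e x) * z x k) =
      (\<lambda>k. \<Sum>n<D * m. of_rat (\<Sum>x\<in>X. e x * q x n) * basis_vec n k)"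
    by (simp add: q of_rat_sum of_rat_mult sum_distrib_left sum_distrib_right mult_ac sum.swap[of _ X])
  show ?thesis
    unfolding rat_form_iff by (rule exI[of _ "\<lambda>n. \<Sum>x\<in>X. e x * q x n"]) (rule eq)
qed

lemma basis_vec_rat_form: "n < D * m \<Longrightarrow> basis_vec n \<in> rat_form"
proof -
  assume "n < D * m"
  moreover have "of_rat (of_bool P) = (of_bool P :: real)" for P by (cases P) simp_all
  ultimately have "basis_vec n = (\<lambda>k. \<Sum>n'<D * m. of_rat (of_bool (n' = n)) * basis_vec n' k)"
    by (simp add: fun_eq_iff)
  then show ?thesis unfolding rat_form_iff by (rule exI[of _ "\<lambda>n'. of_bool (n' = n)"])
qed

lemma tensor_basis_rat_form:
  assumes "i < D" and "h \<in> Z_rho"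
  shows "tensor m d (vR i) h \<in> rat_form"
proof -
  have "tensor m d (vR i) h = tensor m d (vR i) (\<lambda>a. \<Sum>t<m. of_rat (of_int (Z_coords h t)) * \<rho> a ^ t)"
    using Z_coords[OF assms(2)] by (intro tensor_cong) simp
  also have "\<dots> = (\<lambda>k. \<Sum>t<m. of_rat (of_int (Z_coords h t)) * basis_vec (i * m + t) k)"
    using assms(1) by (simp add: tensor_sum_right basis_vec_index)
  also have "\<dots> \<in> rat_form"
    using assms(1) by (intro rat_form_lincomb basis_vec_rat_form mult_add_less_mult) auto
  finally show ?thesis .
qed

lemma tensor_rat_form:
  assumes "y \<in> vecs d" and "h \<in> Z_rho"
  shows "tensor m d (\<lambda>k. of_rat (y k)) h \<in> rat_form"
proof -
  have "(\<lambda>k. of_rat (y k) :: real) = (\<lambda>k. \<Sum>l<D. of_rat (\<Sum>k'<d. W l k' * y k') * vR l k)"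
  proof
    fix k
    have "(\<Sum>l<D. of_rat (\<Sum>k'<d. W l k' * y k') * vR l k) =
        (of_rat (\<Sum>l<D. (\<Sum>k'<d. W l k' * y k') * v l k) :: real)"
      by (simp add: vR_def of_rat_sum of_rat_mult)
    also have "\<dots> = of_rat (y k)"
      by (simp only: basis_expansion[OF assms(1), symmetric])
    finally show "of_rat (y k) = (\<Sum>l<D. of_rat (\<Sum>k'<d. W l k' * y k') * vR l k)" ..
  qed
  then have "tensor m d (\<lambda>k. of_rat (y k)) h =
      (\<lambda>k. \<Sum>l<D. of_rat (\<Sum>k'<d. W l k' * y k') * tensor m d (vR l) h k)"
    by (simp add: tensor_sum_left)
  also have "\<dots> \<in> rat_form"
    using assms(2) by (intro rat_form_lincomb tensor_basis_rat_form) auto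
  finally show ?thesis .
qed

lemma basis_vec_coords:
  assumes "a < m" and "k < d"
  shows "(\<Sum>n<D * m. q n * basis_vec n (a * d + k)) = (\<Sum>i<D. vR i k * (\<Sum>t<m. q (i * m + t) * \<rho> a ^ t))"
  using assms by (simp add: sum_lessThan_mult_split basis_vec_index tensor_index sum_distrib_left mult_ac)

lemma real_indep_basis_vec: "real_indep (D * m) basis_vec"
  unfolding real_indep_def
proof (intro allI impI)
  fix q :: "nat \<Rightarrow> real" and n
  assume "vsum (\<lambda>i. smul (q i) (basis_vec i)) {..<D * m} = (\<lambda>_. 0)" and n: "n < D * m"
  then have zero: "\<And>k. (\<Sum>n<D * m. q n * basis_vec n k) = 0"
    unfolding vsum_smul by meson
  define i where "i = n div m"
  have i: "i < D" unfolding i_def using n by (simp add: less_mult_imp_div_less)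
  have "(\<Sum>t<m. q (i * m + t) * \<rho> a ^ t) = 0" if a: "a < m" for a
  proof -
    have "0 = (\<Sum>k<d. WR i k * (\<Sum>n<D * m. q n * basis_vec n (a * d + k)))"
      by (simp add: zero)
    also have "\<dots> = (\<Sum>j<D. (\<Sum>k<d. WR i k * vR j k) * (\<Sum>t<m. q (j * m + t) * \<rho> a ^ t))"
      by (simp add: basis_vec_coords[OF a] sum_distrib_left sum_distrib_right mult_ac sum.swap[of _ "{..<d}"])
    also have "\<dots> = (\<Sum>t<m. q (i * m + t) * \<rho> a ^ t)"
      using i by (simp add: dual_real)
    finally show ?thesis ..
  qed
  from sum_powers_eq_0_imp_coeffs_0[OF distinct this, where t = "n mod m"] m_pos
  have "q (i * m + n mod m) = 0" by simp
  then show "q n = 0" unfolding i_def by simp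
qed

lemma rat_indep_basis_vec: "rat_indep (D * m) basis_vec"
  using real_indep_basis_vec unfolding rat_indep_def real_indep_def
  by (metis of_rat_eq_0_iff)

lemma lagrange_coords:
  assumes L: "\<And>a a'. a < m \<Longrightarrow> a' < m \<Longrightarrow> (\<Sum>t<m. L a t * \<rho> a' ^ t) = of_bool (a = a')"
    and "a0 < m"
  shows "(\<Sum>t<m. (\<Sum>a<m. \<Sum>k<d. L a t * WR i k * z (a * d + k)) * \<rho> a0 ^ t) =
    (\<Sum>k<d. WR i k * z (a0 * d + k))"
proof -
  have "(\<Sum>t<m. (\<Sum>a<m. \<Sum>k<d. L a t * WR i k * z (a * d + k)) * \<rho> a0 ^ t) =
      (\<Sum>t<m. \<Sum>a<m. \<Sum>k<d. L a t * \<rho> a0 ^ t * (WR i k * z (a * d + k)))"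
    by (simp add: sum_distrib_left sum_distrib_right mult_ac)
  also have "\<dots> = (\<Sum>a<m. \<Sum>k<d. \<Sum>t<m. L a t * \<rho> a0 ^ t * (WR i k * z (a * d + k)))"
    by (subst sum.swap, rule sum.cong[OF refl], rule sum.swap)
  also have "\<dots> = (\<Sum>a<m. of_bool (a = a0) * (\<Sum>k<d. WR i k * z (a * d + k)))"
    using assms(2) by (intro sum.cong refl) (simp add: L sum_distrib_left sum_distrib_right[symmetric])
  also have "\<dots> = (\<Sum>k<d. WR i k * z (a0 * d + k))"
    using assms(2) by simp
  finally show ?thesis .
qed

lemma basis_vec_expansion:
  assumes L: "\<And>a a'. a < m \<Longrightarrow> a' < m \<Longrightarrow> (\<Sum>t<m. L a t * \<rho> a' ^ t) = of_bool (a = a')"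
    and z: "z \<in> vecs (m * d)"
  shows "z N = (\<Sum>n<D * m. (\<Sum>a<m. \<Sum>k<d. L a (n mod m) * WR (n div m) k * z (a * d + k)) * basis_vec n N)"
proof (cases "N < m * d")
  case False
  then show ?thesis using z basis_vec_vecs unfolding vecs_def by simp
next
  case True
  then have "0 < d" by (cases d) auto
  define a0 k0 where "a0 = N div d" and "k0 = N mod d"
  have a0: "a0 < m" and k0: "k0 < d" and N: "N = a0 * d + k0"
    using True \<open>0 < d\<close> by (simp_all add: a0_def k0_def less_mult_imp_div_less)
  have "(\<Sum>n<D * m. (\<Sum>a<m. \<Sum>k<d. L a (n mod m) * WR (n div m) k * z (a * d + k)) * basis_vec n N) =
      (\<Sum>i<D. vR i k0 * (\<Sum>t<m. (\<Sum>a<m. \<Sum>k<d. L a t * WR i k * z (a * d + k)) * \<rho> a0 ^ t))"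
    unfolding N basis_vec_coords[OF a0 k0] by simp
  also have "\<dots> = (\<Sum>i<D. vR i k0 * (\<Sum>k<d. WR i k * z (a0 * d + k)))"
    by (simp add: lagrange_coords[OF L a0])
  also have "\<dots> = (\<Sum>k<d. (\<Sum>i<D. vR i k0 * WR i k) * z (a0 * d + k))"
    by (simp add: sum_distrib_left sum_distrib_right mult_ac sum.swap[of _ "{..<D}"])
  also have "\<dots> = z N"
    unfolding N using k0 by (simp add: complete_real)
  finally show ?thesis ..
qed

lemma real_span_basis_vec: "real_span (D * m) basis_vec = vecs (m * d)"
proof
  show "real_span (D * m) basis_vec \<subseteq> vecs (m * d)"
    unfolding real_span_def vsum_smul using basis_vec_vecs unfolding vecs_def by auto
  obtain L where L: "\<And>a a'. a < m \<Longrightarrow> a' < m \<Longrightarrow> (\<Sum>t<m. L a t * \<rho> a' ^ t) = of_bool (a = a')"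
    using lagrange_coeffs[OF distinct] by blast
  show "vecs (m * d) \<subseteq> real_span (D * m) basis_vec"
  proof
    fix z :: "nat \<Rightarrow> real" assume "z \<in> vecs (m * d)"
    moreover define q where "q n = (\<Sum>a<m. \<Sum>k<d. L a (n mod m) * WR (n div m) k * z (a * d + k))" for n
    ultimately have "z = (\<lambda>N. \<Sum>n<D * m. q n * basis_vec n N)"
      unfolding q_def by (intro ext basis_vec_expansion[where L = L, OF L])
    then show "z \<in> real_span (D * m) basis_vec"
      unfolding real_span_def vsum_smul by blast
  qed
qed

lemma bracket_basis_vec:
  "bracket (basis_vec n) (basis_vec n') =
    tensor m d (\<lambda>k. of_rat (sc_bracket d c (v (n div m)) (v (n' div m)) k)) (\<lambda>a. \<rho> a ^ (n mod m + n' mod m))"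
  unfolding basis_vec_def bracket_tensor vR_def sc_bracket_of_rat by (simp add: power_add)

lemma bracket_rat_comb:
  "bracket (\<lambda>k. \<Sum>n<D * m. of_rat (q n) * basis_vec n k) (\<lambda>k. \<Sum>n<D * m. of_rat (q' n) * basis_vec n k) =
    (\<lambda>k. \<Sum>n<D * m. of_rat (q n) * (\<Sum>n'<D * m. of_rat (q' n') * bracket (basis_vec n) (basis_vec n') k))"
  by (simp add: sc_bracket_bilinear sum_distrib_left mult.assoc)

lemma rat_lie_subalg_rat_form: "rat_lie_subalg (m * d) bracket rat_form"
  unfolding rat_lie_subalg_def
proof (intro conjI ballI allI)
  show "rat_form \<subseteq> vecs (m * d)" by (rule rat_form_vecs)
  show "(\<lambda>_. 0) \<in> rat_form" unfolding rat_form_iff by (intro exI[of _ "\<lambda>_. 0"]) simp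
next
  fix x y assume "x \<in> rat_form" "y \<in> rat_form"
  then obtain q q' where x: "x = (\<lambda>k. \<Sum>n<D * m. of_rat (q n) * basis_vec n k)"
    and y: "y = (\<lambda>k. \<Sum>n<D * m. of_rat (q' n) * basis_vec n k)"
    unfolding rat_form_iff by blast
  have "vadd x y = (\<lambda>k. \<Sum>n<D * m. of_rat (q n + q' n) * basis_vec n k)"
    unfolding x y vadd_def by (simp add: of_rat_add distrib_right sum.distrib)
  then show "vadd x y \<in> rat_form" unfolding rat_form_iff by (rule exI[of _ "\<lambda>n. q n + q' n"])
  have "bracket (basis_vec n) (basis_vec n') \<in> rat_form" for n n'
    unfolding bracket_basis_vec by (intro tensor_rat_form sc_bracket_vecs Z_rho_power)
  then show "bracket x y \<in> rat_form"
    unfolding x y bracket_rat_comb by (intro rat_form_lincomb) auto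
next
  fix r :: rat and x assume "x \<in> rat_form"
  then obtain q where x: "x = (\<lambda>k. \<Sum>n<D * m. of_rat (q n) * basis_vec n k)"
    unfolding rat_form_iff by blast
  have "smul (of_rat r) x = (\<lambda>k. \<Sum>n<D * m. of_rat (r * q n) * basis_vec n k)"
    unfolding x smul_def by (simp add: of_rat_mult sum_distrib_left mult.assoc)
  then show "smul (of_rat r) x \<in> rat_form" unfolding rat_form_iff by (rule exI[of _ "\<lambda>n. r * q n"])
qed

lemma rat_basis_basis_vec: "rat_basis rat_form (D * m) basis_vec"
  unfolding rat_basis_def using basis_vec_rat_form rat_indep_basis_vec unfolding rat_form_def by auto

lemma rational_form_rat_form: "rational_form (m * d) bracket rat_form"
  unfolding rational_form_def
  using rat_lie_subalg_rat_form rat_basis_basis_vec real_indep_basis_vec real_span_basis_vec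
  by (intro conjI exI[of _ "D * m"] exI[of _ basis_vec])

definition Phi :: "(nat \<Rightarrow> real) \<Rightarrow> nat \<Rightarrow> real" where
  "Phi = scale_map (\<lambda>a i. \<rho> a ^ g i)"

definition Phi_inv :: "(nat \<Rightarrow> real) \<Rightarrow> nat \<Rightarrow> real" where
  "Phi_inv = scale_map (\<lambda>a i. inverse (\<rho> a) ^ g i)"

lemma Phi_basis_vec:
  "n < D * m \<Longrightarrow> Phi (basis_vec n) = tensor m d (vR (n div m)) (\<lambda>a. \<rho> a ^ g (n div m) * \<rho> a ^ (n mod m))"
  unfolding Phi_def basis_vec_def by (simp add: scale_map_tensor_basis less_mult_imp_div_less)

lemma Phi_inv_basis_vec:
  "n < D * m \<Longrightarrow>
    Phi_inv (basis_vec n) = tensor m d (vR (n div m)) (\<lambda>a. inverse (\<rho> a) ^ g (n div m) * \<rho> a ^ (n mod m))"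
  unfolding Phi_inv_def basis_vec_def by (simp add: scale_map_tensor_basis less_mult_imp_div_less)

lemma Phi_rat_form: "x \<in> rat_form \<Longrightarrow> Phi x \<in> rat_form"
  and Phi_inv_rat_form: "x \<in> rat_form \<Longrightarrow> Phi_inv x \<in> rat_form"
proof -
  assume "x \<in> rat_form"
  then obtain q where x: "x = (\<lambda>k. \<Sum>n<D * m. of_rat (q n) * basis_vec n k)"
    unfolding rat_form_iff by blast
  have "Phi (basis_vec n) \<in> rat_form" "Phi_inv (basis_vec n) \<in> rat_form" if "n < D * m" for n
    using that Phi_basis_vec Phi_inv_basis_vec
    by (auto intro!: tensor_basis_rat_form Z_rho_mult Z_rho_power Z_rho_inverse_power
        simp: less_mult_imp_div_less)
  then show "Phi x \<in> rat_form" "Phi_inv x \<in> rat_form"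
    unfolding x Phi_def Phi_inv_def scale_map_sum by (auto intro: rat_form_lincomb)
qed

lemma Phi_inv_Phi: "x \<in> vecs (m * d) \<Longrightarrow> Phi_inv (Phi x) = x"
  and Phi_Phi_inv: "x \<in> vecs (m * d) \<Longrightarrow> Phi (Phi_inv x) = x"
  unfolding Phi_def Phi_inv_def
  by (rule scale_map_inverse; use root_nonzero in \<open>simp add: power_mult_distrib[symmetric]\<close>)+

lemma bij_betw_Phi: "bij_betw Phi rat_form rat_form"
  by (rule bij_betw_byWitness[where f' = Phi_inv])
    (use rat_form_vecs Phi_inv_Phi Phi_Phi_inv Phi_rat_form Phi_inv_rat_form in auto)

lemma Phi_tensor_bracket:
  assumes "i < D" and "j < D"
  shows "Phi (tensor m d (\<lambda>k. of_rat (sc_bracket d c (v i) (v j) k)) h) =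
    tensor m d (\<lambda>k. of_rat (sc_bracket d c (v i) (v j) k)) (\<lambda>a. \<rho> a ^ (g i + g j) * h a)"
  unfolding Phi_def
proof (rule scale_map_tensor)
  show "(\<lambda>k. of_rat (sc_bracket d c (v i) (v j) k)) \<in> vecs d"
    using sc_bracket_vecs[of d c "v i" "v j"] by (simp add: vecs_def)
  fix a l assume "l < D" and nonzero: "(\<Sum>k<d. WR l k * of_rat (sc_bracket d c (v i) (v j) k)) \<noteq> 0"
  have "(\<Sum>k<d. WR l k * of_rat (sc_bracket d c (v i) (v j) k)) =
      (of_rat (\<Sum>k<d. W l k * sc_bracket d c (v i) (v j) k) :: real)"
    by (simp add: WR_def of_rat_sum of_rat_mult)
  with nonzero have "g l = g i + g j"
    using bracket_grade assms \<open>l < D\<close> by force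
  then show "\<rho> a ^ g l = \<rho> a ^ (g i + g j)" by simp
qed

lemma Phi_bracket_basis_vec:
  assumes "n < D * m" and "n' < D * m"
  shows "Phi (bracket (basis_vec n) (basis_vec n')) = bracket (Phi (basis_vec n)) (Phi (basis_vec n'))"
proof -
  have i: "n div m < D" and j: "n' div m < D"
    using assms by (simp_all add: less_mult_imp_div_less)
  have "Phi (bracket (basis_vec n) (basis_vec n')) =
      tensor m d (\<lambda>k. of_rat (sc_bracket d c (v (n div m)) (v (n' div m)) k))
        (\<lambda>a. \<rho> a ^ (g (n div m) + g (n' div m)) * \<rho> a ^ (n mod m + n' mod m))"
    by (simp add: bracket_basis_vec Phi_tensor_bracket[OF i j])
  also have "\<dots> = bracket (Phi (basis_vec n)) (Phi (basis_vec n'))"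
    unfolding Phi_basis_vec[OF assms(1)] Phi_basis_vec[OF assms(2)] bracket_tensor vR_def sc_bracket_of_rat
    by (simp add: power_add mult_ac)
  finally show ?thesis .
qed

lemma Phi_bracket: "x \<in> rat_form \<Longrightarrow> y \<in> rat_form \<Longrightarrow> Phi (bracket x y) = bracket (Phi x) (Phi y)"
proof -
  assume "x \<in> rat_form" "y \<in> rat_form"
  then obtain q q' where x: "x = (\<lambda>k. \<Sum>n<D * m. of_rat (q n) * basis_vec n k)"
    and y: "y = (\<lambda>k. \<Sum>n<D * m. of_rat (q' n) * basis_vec n k)"
    unfolding rat_form_iff by blast
  have "Phi (bracket x y) =
      (\<lambda>k. \<Sum>n<D * m. of_rat (q n) * (\<Sum>n'<D * m. of_rat (q' n') * Phi (bracket (basis_vec n) (basis_vec n')) k))"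
    unfolding x y bracket_rat_comb Phi_def scale_map_sum ..
  also have "\<dots> =
      (\<lambda>k. \<Sum>n<D * m. of_rat (q n) * (\<Sum>n'<D * m. of_rat (q' n') * bracket (Phi (basis_vec n)) (Phi (basis_vec n')) k))"
    by (simp add: Phi_bracket_basis_vec)
  also have "\<dots> = bracket (Phi x) (Phi y)"
    unfolding x y Phi_def scale_map_sum by (simp add: sc_bracket_bilinear sum_distrib_left mult.assoc)
  finally show ?thesis .
qed

text \<open>On the block of \<open>v\<^sub>i\<close>, \<open>Phi\<close> is multiplication by the unit \<open>\<rho>\<^sup>g\<^sup>i\<close> of \<open>\<int>[\<rho>]\<close>.\<close>
definition Phi_int_mat :: "int mat" where
  "Phi_int_mat = block_diag_mat D m (\<lambda>i. mult_coeff (\<lambda>a. \<rho> a ^ g i))"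

definition Phi_inv_int_mat :: "int mat" where
  "Phi_inv_int_mat = block_diag_mat D m (\<lambda>i. mult_coeff (\<lambda>a. inverse (\<rho> a) ^ g i))"

definition Phi_mat :: "rat mat" where
  "Phi_mat = map_mat of_int Phi_int_mat"

lemma Phi_int_mat_inverse: "Phi_int_mat * Phi_inv_int_mat = 1\<^sub>m (D * m)"
  unfolding Phi_int_mat_def Phi_inv_int_mat_def block_diag_mat_mult block_diag_mat_delta[symmetric]
  by (rule block_diag_mat_cong, rule mult_coeff_inverse)
    (use root_nonzero in \<open>auto intro: Z_rho_power Z_rho_inverse_power simp: power_mult_distrib[symmetric]\<close>)

lemma integer_like_Phi_mat: "integer_like_mat Phi_mat"
proof -
  have "det Phi_int_mat * det Phi_inv_int_mat = 1"
    using det_mult[of Phi_int_mat "D * m" Phi_inv_int_mat] Phi_int_mat_inverse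
    by (simp add: Phi_int_mat_def Phi_inv_int_mat_def block_diag_mat_carrier)
  then have "det Phi_int_mat = 1 \<or> det Phi_int_mat = -1"
    by (rule pos_zmult_eq_1_iff_lemma)
  moreover have "char_poly Phi_mat = map_poly of_int (char_poly Phi_int_mat)"
    unfolding Phi_mat_def Phi_int_mat_def by (rule of_int_hom.char_poly_hom[OF block_diag_mat_carrier])
  ultimately show ?thesis
    unfolding integer_like_mat_def by (auto simp: Phi_mat_def coeff_map_poly)
qed

lemma Phi_mat_index:
  assumes "i' < D" "t' < m" "i < D" "t < m"
  shows "Phi_mat $$ (i' * m + t', i * m + t) = (if i' = i then of_int (mult_coeff (\<lambda>a. \<rho> a ^ g i) t' t) else 0)"
  using assms mult_add_less_mult[of i' D t' m] mult_add_less_mult[of i D t m]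
  by (simp add: Phi_mat_def Phi_int_mat_def block_diag_mat_index)

lemma Phi_basis_vec_mat:
  assumes "n < D * m"
  shows "Phi (basis_vec n) = vsum (\<lambda>i. smul (of_rat (Phi_mat $$ (i, n))) (basis_vec i)) {..<D * m}"
proof -
  define i t where "i = n div m" and "t = n mod m"
  have i: "i < D" and t: "t < m" and n: "n = i * m + t"
    using assms m_pos by (auto simp: i_def t_def less_mult_imp_div_less)
  have "(\<lambda>k. \<Sum>n'<D * m. of_rat (Phi_mat $$ (n', n)) * basis_vec n' k) =
      (\<lambda>k. \<Sum>i'<D. \<Sum>t'<m. of_rat (Phi_mat $$ (i' * m + t', i * m + t)) * basis_vec (i' * m + t') k)"
    unfolding n by (intro ext sum_lessThan_mult_split)
  also have "\<dots> = (\<lambda>k. \<Sum>i'<D. if i' = i then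
      \<Sum>t'<m. of_int (mult_coeff (\<lambda>a. \<rho> a ^ g i) t' t) * tensor m d (vR i) (\<lambda>a. \<rho> a ^ t') k else 0)"
    using i t by (intro ext sum.cong refl) (simp add: Phi_mat_index basis_vec_index)
  also have "\<dots> = (\<lambda>k. \<Sum>t'<m. of_int (mult_coeff (\<lambda>a. \<rho> a ^ g i) t' t) * tensor m d (vR i) (\<lambda>a. \<rho> a ^ t') k)"
    using i by simp
  also have "\<dots> = tensor m d (vR i) (\<lambda>a. \<Sum>t'<m. of_int (mult_coeff (\<lambda>a. \<rho> a ^ g i) t' t) * \<rho> a ^ t')"
    by (rule tensor_sum_right[symmetric])
  also have "\<dots> = tensor m d (vR i) (\<lambda>a. \<rho> a ^ g i * \<rho> a ^ t)"
    by (intro tensor_cong) (simp add: mult_coeff Z_rho_power)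
  also have "\<dots> = Phi (basis_vec n)"
    unfolding Phi_basis_vec[OF assms] i_def t_def ..
  finally show ?thesis by (simp add: vsum_smul)
qed

text \<open>Restricted to the block of \<open>v\<^sub>i\<close>, an eigenvector of \<open>Phi_mat\<close> is one of multiplication
  by \<open>\<rho>\<^sup>g\<^sup>i\<close>, whose eigenvalues \<open>\<rho>\<^sub>a\<^sup>g\<^sup>i\<close> are off the unit circle since \<open>g i \<ge> 1\<close>.\<close>
lemma hyperbolic_Phi_mat: "hyperbolic_mat Phi_mat"
  unfolding hyperbolic_mat_def
proof (intro allI impI notI)
  fix z :: complex assume "eigenvalue (map_mat of_rat Phi_mat) z" and "cmod z = 1"
  define A :: "complex mat" where "A = block_diag_mat D m (\<lambda>i p q. of_int (mult_coeff (\<lambda>a. \<rho> a ^ g i) p q))"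
  have "map_mat of_rat Phi_mat = A"
    unfolding A_def Phi_mat_def Phi_int_mat_def by (rule eq_matI) (auto simp: block_diag_mat_def)
  then obtain x where x: "x \<in> carrier_vec (D * m)" "x \<noteq> 0\<^sub>v (D * m)" and eigen: "A *\<^sub>v x = z \<cdot>\<^sub>v x"
    using \<open>eigenvalue (map_mat of_rat Phi_mat) z\<close>
    unfolding eigenvalue_def eigenvector_def A_def by (auto simp: block_diag_mat_carrier)
  have block_zero: "x $ (i * m + q) = 0" if i: "i < D" and q: "q < m" for i q
  proof (rule mult_coeff_eigenvector[OF Z_rho_power _ _ q])
    show "(\<Sum>q<m. of_int (mult_coeff (\<lambda>a. \<rho> a ^ g i) p q) * x $ (i * m + q)) = z * x $ (i * m + p)"
      if "p < m" for p
      using block_diag_mat_eigenvector[OF x(1) eigen[unfolded A_def] i that] .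
    show "z \<noteq> of_real (\<rho> a ^ g i)" if "a < m" for a
    proof
      assume "z = of_real (\<rho> a ^ g i)"
      then have "\<bar>\<rho> a\<bar> ^ g i = 1" using \<open>cmod z = 1\<close> by (simp add: norm_power)
      then have "norm \<bar>\<rho> a\<bar> = 1 \<or> g i = 0" by (rule power_eq_1_iff)
      then show False using off_circle[OF that] grade_pos[OF i] by auto
    qed
  qed
  have "x $ n = 0" if "n < D * m" for n
  proof -
    have "n div m < D" "n mod m < m"
      using that m_pos by (simp_all add: less_mult_imp_div_less)
    then have "x $ (n div m * m + n mod m) = 0" by (rule block_zero)
    then show ?thesis by simp
  qed
  then have "x = 0\<^sub>v (D * m)"
    using x(1) by (intro eq_vecI) auto
  with x(2) show False ..
qed

lemma anosov_rat_form: "anosov bracket rat_form"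
  unfolding anosov_def
proof (intro exI conjI)
  show "rat_basis rat_form (D * m) basis_vec" by (rule rat_basis_basis_vec)
  show "Phi_mat \<in> carrier_mat (D * m) (D * m)" by (simp add: Phi_mat_def Phi_int_mat_def block_diag_mat_carrier)
  show "bij_betw Phi rat_form rat_form" by (rule bij_betw_Phi)
  show "\<forall>x\<in>rat_form. \<forall>y\<in>rat_form. Phi (vadd x y) = vadd (Phi x) (Phi y)"
    by (simp add: Phi_def scale_map_add)
  show "\<forall>q. \<forall>x\<in>rat_form. Phi (smul (of_rat q) x) = smul (of_rat q) (Phi x)"
    by (simp add: Phi_def scale_map_smul)
  show "\<forall>x\<in>rat_form. \<forall>y\<in>rat_form. Phi (bracket x y) = bracket (Phi x) (Phi y)"
    by (simp add: Phi_bracket)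
  show "\<forall>j<D * m. Phi (basis_vec j) = vsum (\<lambda>i. smul (of_rat (Phi_mat $$ (i, j))) (basis_vec i)) {..<D * m}"
    by (simp add: Phi_basis_vec_mat)
  show "hyperbolic_mat Phi_mat" by (rule hyperbolic_Phi_mat)
  show "integer_like_mat Phi_mat" by (rule integer_like_Phi_mat)
qed

end

theorem theorem3p1:
  fixes d m :: nat and c :: "nat \<Rightarrow> nat \<Rightarrow> nat \<Rightarrow> rat"
  assumes "lie_sc d c" and "graded_sc d c" and "m \<ge> 2"
  shows "\<exists>M. rational_form (m * d)
               (sc_bracket (m * d) (\<lambda>p q r. of_rat (dsum_sc m d c p q r))) M \<and>
             anosov (sc_bracket (m * d) (\<lambda>p q r. of_rat (dsum_sc m d c p q r))) M"
proof -
  have "m \<noteq> 1" using assms(3) by simp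
  then obtain P S where P: "hyperbolic_unit_poly P S" and card: "card S = m"
    using hyperbolic_unit_poly_exists by blast
  have "0 < card S" using card assms(3) by simp
  then obtain \<rho> where "unit_root_family P (card S) \<rho>"
    using hyperbolic_unit_poly_unit_root_family[OF P] by blast
  then have "unit_root_family P m \<rho>"
    unfolding card .
  moreover obtain D v W g where "graded_basis d c D v W g"
    using graded_sc_graded_basis[OF assms(2)] .
  ultimately interpret anosov_construction P m \<rho> d c D v W g
    by (intro anosov_construction.intro)
  show ?thesis
    using rational_form_rat_form anosov_rat_form by blast
qed

end
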